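(* Let $F$ be an infinite field of characteristic $p>2$ and let $E^{can}$ be the Grassmann algebra $E$ with the $\mathbb{Z}$-grading in which every generator $e_i$ has degree $1$. Then every $\mathbb{Z}$-graded polynomial identity of $E^{can}$ is a consequence of (i.e. lies in the $T_{\mathbb{Z}}$-ideal generated by) the following graded polynomials: $x$ for every variable with $\alpha(x)<0$; $[x_1,x_2]$ whenever $\alpha(x_1)$ or $\alpha(x_2)$ is even; $x_1x_2+x_2x_1$ whenever $\alpha(x_1)$ and $\alpha(x_2)$ are both odd; and $x^p$ for every variable $x$ with $\alpha(x)\ge 1$ even.
   Context: $L$ is a vector space over $F$ with basis $e_1,e_2,\dots$, and $E$ is the unital Grassmann algebra of $L$: basis $1$ and $e_{i_1}\cdots e_{i_k}$ ($i_1<\cdots<i_k$), with $e_ie_j=-e_je_i$. In $E^{can}$ the homogeneous component of degree $n\ge1$ is spanned by basis monomials of length $n$, degree $0$ component is $F$, negative components are $0$. $F\langle X|\mathbb{Z}\rangle$ is the free unital associative algebra on $X=\bigcup_{i\in\mathbb{Z}}X_i$, each $X_i$ a countably infinite set of variables of degree $i$; $\alpha(x)$ is the degree of $x$. A polynomial $f(x_1,\dots,x_r)$ is a $\mathbb{Z}$-graded identity of a $\mathbb{Z}$-graded algebra $A$ if $f(a_1,\dots,a_r)=0$ for all $a_j\in A_{\alpha(x_j)}$. A $T_{\mathbb{Z}}$-ideal is an ideal of $F\langle X|\mathbb{Z}\rangle$ invariant under all degree-preserving endomorphisms. $[a,b]=ab-ba$. *)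

theory Defs
  imports Main "HOL-Computational_Algebra.Primes"
begin

text \<open>A variable is a pair (i, n): the n-th variable of degree i.  Hence
  X_i = {(i,n) | n} is countably infinite and X is the union of all X_i.\<close>
type_synonym var = "int \<times> nat"

definition alpha :: "var \<Rightarrow> int" where
  "alpha x = fst x"

text \<open>A noncommutative polynomial is a finitely supported coefficient function
  on words (lists of variables); the empty word is the monomial 1.\<close>
type_synonym 'a fpoly = "var list \<Rightarrow> 'a"

definition fpoly :: "'a::field fpoly \<Rightarrow> bool" where
  "fpoly f \<longleftrightarrow> finite {w. f w \<noteq> 0}"

definition padd :: "'a::field fpoly \<Rightarrow> 'a fpoly \<Rightarrow> 'a fpoly" where
  "padd f g = (\<lambda>w. f w + g w)"

definition pneg :: "'a::field fpoly \<Rightarrow> 'a fpoly" where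
  "pneg f = (\<lambda>w. - f w)"

definition psub :: "'a::field fpoly \<Rightarrow> 'a fpoly \<Rightarrow> 'a fpoly" where
  "psub f g = (\<lambda>w. f w - g w)"

definition psmult :: "'a::field \<Rightarrow> 'a fpoly \<Rightarrow> 'a fpoly" where
  "psmult c f = (\<lambda>w. c * f w)"

definition pzero :: "'a::field fpoly" where
  "pzero = (\<lambda>w. 0)"

definition pone :: "'a::field fpoly" where
  "pone = (\<lambda>w. if w = [] then 1 else 0)"

definition pvar :: "var \<Rightarrow> 'a::field fpoly" where
  "pvar x = (\<lambda>w. if w = [x] then 1 else 0)"

definition pmul :: "'a::field fpoly \<Rightarrow> 'a fpoly \<Rightarrow> 'a fpoly" where
  "pmul f g = (\<lambda>w. \<Sum>i\<le>length w. f (take i w) * g (drop i w))"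

definition ppow :: "'a::field fpoly \<Rightarrow> nat \<Rightarrow> 'a fpoly" where
  "ppow f n = ((\<lambda>h. pmul f h) ^^ n) pone"

definition pcomm :: "'a::field fpoly \<Rightarrow> 'a fpoly \<Rightarrow> 'a fpoly" where
  "pcomm f g = psub (pmul f g) (pmul g f)"

definition word_deg :: "var list \<Rightarrow> int" where
  "word_deg w = sum_list (map alpha w)"

definition homog :: "int \<Rightarrow> 'a::field fpoly \<Rightarrow> bool" where
  "homog i f \<longleftrightarrow> fpoly f \<and> (\<forall>w. f w \<noteq> 0 \<longrightarrow> word_deg w = i)"

definition graded_endo :: "('a::field fpoly \<Rightarrow> 'a fpoly) \<Rightarrow> bool" where
  "graded_endo h \<longleftrightarrow>
     (\<forall>f. fpoly f \<longrightarrow> fpoly (h f)) \<and>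
     (\<forall>f g. fpoly f \<longrightarrow> fpoly g \<longrightarrow> h (padd f g) = padd (h f) (h g)) \<and>
     (\<forall>c f. fpoly f \<longrightarrow> h (psmult c f) = psmult c (h f)) \<and>
     (\<forall>f g. fpoly f \<longrightarrow> fpoly g \<longrightarrow> h (pmul f g) = pmul (h f) (h g)) \<and>
     h pone = pone \<and>
     (\<forall>i f. homog i f \<longrightarrow> homog i (h f))"

definition pideal :: "'a::field fpoly set \<Rightarrow> bool" where
  "pideal I \<longleftrightarrow>
     I \<subseteq> {f. fpoly f} \<and> pzero \<in> I \<and>
     (\<forall>f\<in>I. \<forall>g\<in>I. padd f g \<in> I) \<and>
     (\<forall>c. \<forall>f\<in>I. psmult c f \<in> I) \<and>
     (\<forall>f\<in>I. \<forall>g. fpoly g \<longrightarrow> pmul g f \<in> I \<and> pmul f g \<in> I)"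

definition TZ_ideal :: "'a::field fpoly set \<Rightarrow> bool" where
  "TZ_ideal I \<longleftrightarrow> pideal I \<and> (\<forall>h. graded_endo h \<longrightarrow> (\<forall>f\<in>I. h f \<in> I))"

definition TZ_gen :: "'a::field fpoly set \<Rightarrow> 'a fpoly set" where
  "TZ_gen S = \<Inter> {I. TZ_ideal I \<and> S \<subseteq> I}"

text \<open>An element of E is a finitely supported coefficient function on finite
  sets S of indices; S = {i1 < ... < ik} stands for the basis monomial
  e_i1 ... e_ik (the empty set stands for 1).  Indices run over nat (a harmless
  relabelling of e_1, e_2, ...).\<close>
type_synonym 'a grass = "nat set \<Rightarrow> 'a"

definition grass :: "'a::field grass \<Rightarrow> bool" where
  "grass a \<longleftrightarrow> finite {S. a S \<noteq> 0} \<and> (\<forall>S. a S \<noteq> 0 \<longrightarrow> finite S)"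

text \<open>Sign of e_S e_T = sign * e_(S \<union> T) for disjoint S, T.\<close>
definition gsign :: "nat set \<Rightarrow> nat set \<Rightarrow> int" where
  "gsign S T = (-1) ^ card {(s, t). s \<in> S \<and> t \<in> T \<and> t < s}"

definition gmul :: "'a::field grass \<Rightarrow> 'a grass \<Rightarrow> 'a grass" where
  "gmul a b = (\<lambda>U. if finite U then
       (\<Sum>S\<in>Pow U. of_int (gsign S (U - S)) * a S * b (U - S)) else 0)"

definition gone :: "'a::field grass" where
  "gone = (\<lambda>S. if S = {} then 1 else 0)"

definition gzero :: "'a::field grass" where
  "gzero = (\<lambda>S. 0)"

definition Ecan_comp :: "int \<Rightarrow> 'a::field grass set" where
  "Ecan_comp n = (if n < 0 then {gzero}
     else {a. grass a \<and> (\<forall>S. a S \<noteq> 0 \<longrightarrow> card S = nat n)})"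

fun gprod :: "'a::field grass list \<Rightarrow> 'a grass" where
  "gprod [] = gone"
| "gprod (a # as) = gmul a (gprod as)"

definition peval :: "(var \<Rightarrow> 'a::field grass) \<Rightarrow> 'a fpoly \<Rightarrow> 'a grass" where
  "peval \<phi> f = (\<lambda>U. \<Sum>w\<in>{w. f w \<noteq> 0}. f w * gprod (map \<phi> w) U)"

definition Ecan_identity :: "'a::field fpoly \<Rightarrow> bool" where
  "Ecan_identity f \<longleftrightarrow> fpoly f \<and>
     (\<forall>\<phi>. (\<forall>x. \<phi> x \<in> Ecan_comp (alpha x)) \<longrightarrow> peval \<phi> f = gzero)"

definition Ecan_gens :: "nat \<Rightarrow> 'a::field fpoly set" where
  "Ecan_gens p =
     {pvar x | x. alpha x < 0} \<union>
     {pcomm (pvar x1) (pvar x2) | x1 x2. x1 \<noteq> x2 \<and> (even (alpha x1) \<or> even (alpha x2))} \<union>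
     {padd (pmul (pvar x1) (pvar x2)) (pmul (pvar x2) (pvar x1)) | x1 x2.
        x1 \<noteq> x2 \<and> odd (alpha x1) \<and> odd (alpha x2)} \<union>
     {ppow (pvar x) p | x. alpha x \<ge> 1 \<and> even (alpha x)}"

end

theory Submission
  imports Defs "HOL-Library.Countable" "HOL-Library.Product_Lexorder"
    "HOL-Computational_Algebra.Polynomial" "HOL-Library.Function_Algebras"
begin

text \<open>Let \<open>I\<close> be a \<open>T\<^sub>\<int>\<close>-ideal containing the listed polynomials.  Modulo \<open>I\<close>, every
  word is a scalar multiple of a normal word: a sorted word without variables of negative
  degree in which every odd variable occurs at most once and every even variable of positive
  degree fewer than \<open>p\<close> times.  The rewriting only uses relations that also hold in
  \<open>E\<^sup>c\<^sup>a\<^sup>n\<close>; the relation \<open>x\<^sup>2\<close> for odd \<open>x\<close> is obtained from an anticommutator by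
  renaming and dividing by \<open>2\<close>, which needs \<open>p > 2\<close>.

  Normal words stay linearly independent modulo the graded identities of \<open>E\<^sup>c\<^sup>a\<^sup>n\<close>.
  Fix a normal word.  Substitute free scalars for the variables of degree 0 and, for a
  variable \<open>x\<close> of positive degree occurring \<open>k < p\<close> times, the sum of \<open>k\<close> products of
  disjoint blocks of \<open>\<alpha>(x)\<close> fresh generators.  The coefficient of the product of all these
  blocks then kills every normal word with a different part of positive degree and multiplies
  the others by a nonzero product of factorials.  What remains is a polynomial in the
  scalars vanishing everywhere on an infinite field, so all its coefficients vanish.
  Hence a graded identity is congruent modulo \<open>I\<close> to the zero combination of normal
  words, that is, it lies in \<open>I\<close>.\<close>

lemma power_add_square_zero:
  fixes a b :: "'r::ring_1"
  assumes ab: "a * b = b * a" and bb: "b * b = 0"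
  shows "(a + b) ^ Suc n = a ^ Suc n + of_nat (Suc n) * a ^ n * b"
proof (induction n)
  case (Suc n)
  have ba: "b * a ^ k = a ^ k * b" for k
    by (simp add: power_commuting_commutes[OF ab])
  have of_nat_left: "x * (of_nat k * z) = of_nat k * (x * z)" for x z :: 'r and k
    by (metis mult.assoc mult_of_nat_commute)
  have "(a + b) ^ Suc (Suc n) = (a + b) * (a ^ Suc n + of_nat (Suc n) * a ^ n * b)"
    using Suc by simp
  also have "\<dots> = a ^ Suc (Suc n) + of_nat (Suc n) * a ^ Suc n * b + b * a ^ Suc n
      + of_nat (Suc n) * (b * a ^ n) * b"
    by (simp add: algebra_simps of_nat_left)
  also have "of_nat (Suc n) * (b * a ^ n) * b = of_nat (Suc n) * a ^ n * (b * b)"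
    by (simp add: ba mult.assoc)
  also have "b * a ^ Suc n = a ^ Suc n * b"
    by (rule ba)
  finally show ?case using bb by (simp add: algebra_simps)
qed simp

lemma power_sum_squares_zero_char:
  fixes m :: "'i \<Rightarrow> 'r::ring_1"
  assumes "finite F" "\<And>x y. x \<in> F \<Longrightarrow> y \<in> F \<Longrightarrow> m x * m y = m y * m x"
    and "\<And>x. x \<in> F \<Longrightarrow> m x * m x = 0" "of_nat p = (0::'r)" "p > 0"
  shows "(sum m F) ^ p = 0"
  using assms
proof (induction F rule: finite_induct)
  case empty then show ?case by (simp add: power_0_left)
next
  case (insert x F)
  obtain q where q: "p = Suc q" using insert.prems by (cases p) auto
  have "sum m F * m x = m x * sum m F"
    using insert.prems by (simp add: sum_distrib_left sum_distrib_right)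
  then have "(sum m F + m x) ^ Suc q = sum m F ^ Suc q + of_nat (Suc q) * sum m F ^ q * m x"
    by (rule power_add_square_zero) (use insert.prems in auto)
  then show ?case using insert q by (simp add: add.commute)
qed

lemma power_sum_squares_zero_fact:
  fixes m :: "nat \<Rightarrow> 'r::ring_1"
  assumes "\<And>i j. i < n \<Longrightarrow> j < n \<Longrightarrow> m i * m j = m j * m i"
    and "\<And>i. i < n \<Longrightarrow> m i * m i = 0"
  shows "(\<Sum>j<n. m j) ^ n = of_nat (fact n) * prod_list (map m [0..<n])"
proof -
  have "(\<Sum>j<n. m j) ^ n = of_nat (fact n) * prod_list (map m [0..<n])
      \<and> (\<Sum>j<n. m j) ^ Suc n = 0"
    using assms
  proof (induction n)
    case (Suc n)
    have IH: "(\<Sum>j<n. m j) ^ n = of_nat (fact n) * prod_list (map m [0..<n])"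
      "(\<Sum>j<n. m j) ^ Suc n = 0" using Suc by auto
    have c: "(\<Sum>j<n. m j) * m n = m n * (\<Sum>j<n. m j)"
      using Suc.prems by (simp add: sum_distrib_left sum_distrib_right)
    have mm: "m n * m n = 0" using Suc.prems by auto
    have e: "(\<Sum>j<Suc n. m j) = (\<Sum>j<n. m j) + m n" by simp
    have "(\<Sum>j<Suc n. m j) ^ Suc n = (\<Sum>j<n. m j) ^ Suc n + of_nat (Suc n) * (\<Sum>j<n. m j) ^ n * m n"
      unfolding e by (rule power_add_square_zero[OF c mm])
    also have "\<dots> = of_nat (Suc n) * (of_nat (fact n) * prod_list (map m [0..<n])) * m n"
      using IH by simp
    also have "\<dots> = of_nat (fact (Suc n)) * prod_list (map m [0..<Suc n])"
      by (simp only: fact_Suc of_nat_mult mult.assoc) simp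
    finally have fact: "(\<Sum>j<Suc n. m j) ^ Suc n = of_nat (fact (Suc n)) * prod_list (map m [0..<Suc n])" .
    have "(\<Sum>j<n. m j) ^ Suc (Suc n) = 0"
      using IH(2) by (metis mult_zero_right power_Suc)
    then have "(\<Sum>j<Suc n. m j) ^ Suc (Suc n) = 0"
      unfolding e power_add_square_zero[OF c mm] IH(2) by simp
    with fact show ?case by simp
  qed simp
  then show ?thesis ..
qed

lemma coeffs_eq_0_if_sum_powers_eq_0:
  fixes a :: "nat \<Rightarrow> 'a::field"
  assumes "infinite (UNIV :: 'a set)" "finite N" "\<And>s. (\<Sum>n\<in>N. a n * s ^ n) = 0" "n \<in> N"
  shows "a n = 0"
proof -
  define P where "P = (\<Sum>n\<in>N. monom (a n) n)"
  have "poly P s = 0" for s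
    using assms(3) by (simp add: P_def poly_sum poly_monom)
  then have "P = 0"
    using poly_roots_finite[of P] assms(1) by auto
  moreover have "coeff P n = a n"
    using assms(2,4) by (simp add: P_def coeff_sum)
  ultimately show ?thesis by simp
qed

lemma coeffs_eq_0_if_sum_monomials_eq_0:
  fixes c :: "'i \<Rightarrow> 'a::field" and e :: "'i \<Rightarrow> 'v \<Rightarrow> nat"
  assumes "infinite (UNIV :: 'a set)" "finite Z" "finite K"
    and "\<And>i j. i \<in> K \<Longrightarrow> j \<in> K \<Longrightarrow> \<forall>z\<in>Z. e i z = e j z \<Longrightarrow> i = j"
    and "\<And>t. (\<Sum>i\<in>K. c i * (\<Prod>z\<in>Z. t z ^ e i z)) = 0" and "i \<in> K"
  shows "c i = 0"
  using assms(2-6)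
proof (induction Z arbitrary: K rule: finite_induct)
  case empty
  then have "K = {i}" by auto
  then show ?case using empty.prems(3) by simp
next
  case (insert z Z)
  define K' where "K' = {j\<in>K. e j z = e i z}"
  have "(\<Sum>j\<in>K'. c j * (\<Prod>z'\<in>Z. t z' ^ e j z')) = 0" for t
  proof -
    define g where "g n = (\<Sum>j\<in>{j\<in>K. e j z = n}. c j * (\<Prod>z'\<in>Z. t z' ^ e j z'))" for n
    have sum_eq: "(\<Sum>n\<in>(\<lambda>j. e j z) ` K. g n * s ^ n) = 0" for s
    proof -
      have "(\<Prod>z'\<in>Z. (t(z := s)) z' ^ e j z') = (\<Prod>z'\<in>Z. t z' ^ e j z')" for j
        using insert.hyps by (intro prod.cong) auto
      then have "(\<Prod>z'\<in>insert z Z. (t(z := s)) z' ^ e j z') = s ^ e j z * (\<Prod>z'\<in>Z. t z' ^ e j z')" for j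
        using insert.hyps by simp
      then have "0 = (\<Sum>j\<in>K. c j * (s ^ e j z * (\<Prod>z'\<in>Z. t z' ^ e j z')))"
        using insert.prems(3)[of "t(z := s)"] by simp
      also have "\<dots> = (\<Sum>j\<in>K. c j * (\<Prod>z'\<in>Z. t z' ^ e j z') * s ^ e j z)"
        by (simp add: ac_simps)
      also have "\<dots> = (\<Sum>n\<in>(\<lambda>j. e j z) ` K. \<Sum>j\<in>{j\<in>K. e j z = n}. c j * (\<Prod>z'\<in>Z. t z' ^ e j z') * s ^ e j z)"
        by (rule sum.image_gen[OF insert.prems(1)])
      also have "\<dots> = (\<Sum>n\<in>(\<lambda>j. e j z) ` K. g n * s ^ n)"
        unfolding g_def sum_distrib_right by (rule sum.cong[OF refl], rule sum.cong[OF refl]) simp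
      finally show ?thesis by simp
    qed
    have "g (e i z) = 0"
      by (rule coeffs_eq_0_if_sum_powers_eq_0[OF assms(1) _ sum_eq]) (use insert.prems(1,4) in auto)
    then show ?thesis by (simp add: g_def K'_def)
  qed
  moreover have "j = j'" if "j \<in> K'" "j' \<in> K'" "\<forall>z'\<in>Z. e j z' = e j' z'" for j j'
    using that insert.prems(2)[of j j'] by (simp add: K'_def)
  ultimately show ?case
    using insert.prems(1,4) by (intro insert.IH[of K']) (simp_all add: K'_def)
qed

lemma prod_list_map_filter_eq_prod_count:
  fixes t :: "'v \<Rightarrow> 'a::comm_monoid_mult"
  assumes "finite Z" "\<And>z. z \<in> set xs \<Longrightarrow> P z \<Longrightarrow> z \<in> Z" "\<And>z. z \<in> Z \<Longrightarrow> P z"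
  shows "prod_list (map t (filter P xs)) = (\<Prod>z\<in>Z. t z ^ count (mset xs) z)"
proof -
  have "prod_list (map t (filter P xs)) = prod_mset (image_mset t (mset (filter P xs)))"
    by (simp flip: prod_mset_prod_list)
  also have "\<dots> = (\<Prod>z\<in>set (filter P xs). t z ^ count (mset (filter P xs)) z)"
    by (simp add: image_prod_mset_multiplicity)
  also have "\<dots> = (\<Prod>z\<in>Z. t z ^ count (mset xs) z)"
  proof (intro prod.mono_neutral_cong_left)
    show "\<forall>z\<in>Z - set (filter P xs). t z ^ count (mset xs) z = 1"
    proof
      fix z assume "z \<in> Z - set (filter P xs)"
      then have "z \<notin> set xs" using assms(3) by auto
      then show "t z ^ count (mset xs) z = 1" by (simp add: count_mset_0_iff[THEN iffD2])
    qed
  qed (use assms in auto)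
  finally show ?thesis .
qed

section \<open>The Grassmann algebra\<close>

definition inversions :: "nat set \<Rightarrow> nat set \<Rightarrow> (nat \<times> nat) set" where
  "inversions S T = {(s, t). s \<in> S \<and> t \<in> T \<and> t < s}"

lemma gsign_eq_inversions: "gsign S T = (-1) ^ card (inversions S T)"
  by (simp add: gsign_def inversions_def)

lemma finite_inversions: "finite S \<Longrightarrow> finite T \<Longrightarrow> finite (inversions S T)"
  by (rule finite_subset[of _ "S \<times> T"]) (auto simp: inversions_def)

lemma gsign_empty_left [simp]: "gsign {} T = 1"
  and gsign_empty_right [simp]: "gsign S {} = 1"
  by (simp_all add: gsign_def)

lemma of_int_gsign_neq_0: "(of_int (gsign S T) :: 'a::field) \<noteq> 0"
  by (simp add: gsign_def)

lemma gsign_Un_left: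
  assumes "finite A" "finite B" "finite C" "A \<inter> B = {}"
  shows "gsign (A \<union> B) C = gsign A C * gsign B C"
proof -
  have "inversions (A \<union> B) C = inversions A C \<union> inversions B C"
    and "inversions A C \<inter> inversions B C = {}"
    using assms(4) by (auto simp: inversions_def)
  then show ?thesis
    by (simp add: gsign_eq_inversions card_Un_disjoint finite_inversions assms power_add)
qed

lemma gsign_Un_right:
  assumes "finite A" "finite B" "finite C" "B \<inter> C = {}"
  shows "gsign A (B \<union> C) = gsign A B * gsign A C"
proof -
  have "inversions A (B \<union> C) = inversions A B \<union> inversions A C"
    and "inversions A B \<inter> inversions A C = {}"
    using assms(4) by (auto simp: inversions_def)
  then show ?thesis
    by (simp add: gsign_eq_inversions card_Un_disjoint finite_inversions assms power_add)
qed

lemma gsign_swap: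
  assumes "finite S" "finite T" "S \<inter> T = {}"
  shows "gsign S T = (-1) ^ (card S * card T) * gsign T S"
proof -
  have cover: "inversions S T \<union> prod.swap ` inversions T S = S \<times> T"
    using assms(3) by (auto simp: inversions_def image_iff)
  have disj: "inversions S T \<inter> prod.swap ` inversions T S = {}"
    by (auto simp: inversions_def)
  have "card (prod.swap ` inversions T S) = card (inversions T S)"
    by (simp add: card_image)
  then have "card (inversions S T) + card (inversions T S) = card S * card T"
    using card_Un_disjoint[OF finite_inversions[OF assms(1,2)]
        finite_imageI[OF finite_inversions[OF assms(2,1)]] disj]
    by (simp add: cover card_cartesian_product)
  then have "(-1) ^ (card S * card T) * gsign T S = gsign S T * (gsign T S * gsign T S)"
    by (metis gsign_eq_inversions power_add mult.assoc)
  also have "gsign T S * gsign T S = 1"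
    by (simp add: gsign_def flip: power_mult_distrib)
  finally show ?thesis by simp
qed

definition gmul_triple :: "'a::field grass \<Rightarrow> 'a grass \<Rightarrow> 'a grass \<Rightarrow> nat set \<Rightarrow> 'a" where
  "gmul_triple a b c U = (\<Sum>R\<in>Pow U. \<Sum>T\<in>Pow (U - R).
     of_int (gsign R T * gsign R (U - R - T) * gsign T (U - R - T)) * a R * b T * c (U - R - T))"

lemma gmul_gmul_left:
  assumes "finite U"
  shows "gmul (gmul a b) c U = gmul_triple a b c U"
proof -
  let ?h = "\<lambda>S R. of_int (gsign S (U - S)) * (of_int (gsign R (S - R)) * a R * b (S - R)) * c (U - S)"
  have "gmul (gmul a b) c U = (\<Sum>S\<in>Pow U. \<Sum>R\<in>Pow S. ?h S R)"
    using assms by (simp add: gmul_def sum_distrib_left sum_distrib_right finite_subset)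
  also have "\<dots> = (\<Sum>S\<in>Pow U. \<Sum>R\<in>Pow U. if R \<subseteq> S then ?h S R else 0)"
  proof (rule sum.cong[OF refl])
    fix S assume "S \<in> Pow U"
    then show "(\<Sum>R\<in>Pow S. ?h S R) = (\<Sum>R\<in>Pow U. if R \<subseteq> S then ?h S R else 0)"
      using assms by (simp add: sum.If_cases Int_absorb1 Pow_mono flip: Pow_def)
  qed
  also have "\<dots> = (\<Sum>R\<in>Pow U. \<Sum>S\<in>Pow U. if R \<subseteq> S then ?h S R else 0)"
    by (rule sum.swap)
  also have "\<dots> = (\<Sum>R\<in>Pow U. \<Sum>S\<in>{S. R \<subseteq> S \<and> S \<subseteq> U}. ?h S R)"
    using assms by (intro sum.cong[OF refl]) (simp add: sum.If_cases, rule sum.cong, auto)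
  also have "\<dots> = (\<Sum>R\<in>Pow U. \<Sum>T\<in>Pow (U - R). ?h (R \<union> T) R)"
  proof (rule sum.cong[OF refl])
    fix R assume "R \<in> Pow U"
    then show "(\<Sum>S\<in>{S. R \<subseteq> S \<and> S \<subseteq> U}. ?h S R) = (\<Sum>T\<in>Pow (U - R). ?h (R \<union> T) R)"
      by (intro sum.reindex_bij_witness[of _ "\<lambda>T. R \<union> T" "\<lambda>S. S - R"]) (auto simp: Un_absorb1)
  qed
  also have "\<dots> = (\<Sum>R\<in>Pow U. \<Sum>T\<in>Pow (U - R).
    of_int (gsign R T * gsign R (U - R - T) * gsign T (U - R - T)) * a R * b T * c (U - R - T))"
  proof (intro sum.cong[OF refl])
    fix R T assume R: "R \<in> Pow U" and T: "T \<in> Pow (U - R)"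
    then have "finite R" "finite T" "finite (U - R - T)"
      using assms by (auto intro: finite_subset)
    then have "gsign (R \<union> T) (U - R - T) = gsign R (U - R - T) * gsign T (U - R - T)"
      using T by (intro gsign_Un_left) auto
    moreover have "R \<union> T - R = T" "U - (R \<union> T) = U - R - T" using T by auto
    ultimately show "?h (R \<union> T) R = of_int (gsign R T * gsign R (U - R - T) * gsign T (U - R - T))
      * a R * b T * c (U - R - T)"
      by (simp add: algebra_simps)
  qed
  finally show ?thesis unfolding gmul_triple_def .
qed

lemma gmul_gmul_right:
  assumes "finite U"
  shows "gmul a (gmul b c) U = gmul_triple a b c U"
proof -
  have "gmul a (gmul b c) U = (\<Sum>R\<in>Pow U. \<Sum>T\<in>Pow (U - R).
    of_int (gsign R (U - R)) * a R * (of_int (gsign T (U - R - T)) * b T * c (U - R - T)))"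
    using assms by (simp add: gmul_def sum_distrib_left)
  also have "\<dots> = (\<Sum>R\<in>Pow U. \<Sum>T\<in>Pow (U - R).
    of_int (gsign R T * gsign R (U - R - T) * gsign T (U - R - T)) * a R * b T * c (U - R - T))"
  proof (intro sum.cong[OF refl])
    fix R T assume R: "R \<in> Pow U" and T: "T \<in> Pow (U - R)"
    then have "finite R" "finite T" "finite (U - R - T)"
      using assms by (auto intro: finite_subset)
    moreover have "U - R = T \<union> (U - R - T)" using T by auto
    ultimately have "gsign R (U - R) = gsign R T * gsign R (U - R - T)"
      by (metis Diff_disjoint gsign_Un_right)
    then show "of_int (gsign R (U - R)) * a R * (of_int (gsign T (U - R - T)) * b T * c (U - R - T)) =
      of_int (gsign R T * gsign R (U - R - T) * gsign T (U - R - T)) * a R * b T * c (U - R - T)"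
      by (simp add: algebra_simps)
  qed
  finally show ?thesis unfolding gmul_triple_def .
qed

lemma gmul_assoc: "gmul (gmul a b) c = gmul a (gmul b c)"
proof
  fix U
  show "gmul (gmul a b) c U = gmul a (gmul b c) U"
    by (cases "finite U") (simp_all add: gmul_gmul_left gmul_gmul_right, simp_all add: gmul_def)
qed

lemma gmul_add_left: "gmul (\<lambda>S. a S + b S) c = (\<lambda>S. gmul a c S + gmul b c S)"
  by (rule ext) (simp add: gmul_def algebra_simps sum.distrib)

lemma gmul_add_right: "gmul a (\<lambda>S. b S + c S) = (\<lambda>S. gmul a b S + gmul a c S)"
  by (rule ext) (simp add: gmul_def algebra_simps sum.distrib)

lemma gmul_gone_left:
  assumes "\<forall>S. infinite S \<longrightarrow> a S = 0"
  shows "gmul gone a = a"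
proof
  fix U
  show "gmul gone a U = a U"
  proof (cases "finite U")
    case True
    then have "gmul gone a U = (\<Sum>S\<in>Pow U. if S = {} then a U else 0)"
      unfolding gmul_def gone_def if_P[OF True] by (intro sum.cong) (auto simp: Diff_eq_empty_iff)
    then show ?thesis using True by simp
  qed (simp add: gmul_def assms)
qed

lemma gmul_gone_right:
  assumes "\<forall>S. infinite S \<longrightarrow> a S = 0"
  shows "gmul a gone = a"
proof
  fix U
  show "gmul a gone U = a U"
  proof (cases "finite U")
    case True
    then have "gmul a gone U = (\<Sum>S\<in>Pow U. if S = U then a U else 0)"
      unfolding gmul_def gone_def if_P[OF True] by (intro sum.cong) (auto simp: Diff_eq_empty_iff)
    then show ?thesis using True by simp
  qed (simp add: gmul_def assms)
qed

text \<open>Only vanishing on infinite index sets is imposed (it makes \<^const>\<open>gone\<close> a unit).\<close>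

typedef (overloaded) 'a grassmann = "{a :: 'a::field grass. \<forall>S. infinite S \<longrightarrow> a S = 0}"
  by (rule exI[of _ "\<lambda>S. 0"]) auto

setup_lifting type_definition_grassmann

instantiation grassmann :: (field) ring_1
begin

lift_definition zero_grassmann :: "'a grassmann" is "\<lambda>S. 0" by simp
lift_definition one_grassmann :: "'a grassmann" is gone by (auto simp: gone_def)
lift_definition plus_grassmann :: "'a grassmann \<Rightarrow> 'a grassmann \<Rightarrow> 'a grassmann"
  is "\<lambda>a b S. a S + b S" by simp
lift_definition uminus_grassmann :: "'a grassmann \<Rightarrow> 'a grassmann" is "\<lambda>a S. - a S" by simp
lift_definition minus_grassmann :: "'a grassmann \<Rightarrow> 'a grassmann \<Rightarrow> 'a grassmann"
  is "\<lambda>a b S. a S - b S" by simp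
lift_definition times_grassmann :: "'a grassmann \<Rightarrow> 'a grassmann \<Rightarrow> 'a grassmann"
  is gmul by (simp add: gmul_def)

instance
proof
  fix a b c :: "'a grassmann"
  show "a * b * c = a * (b * c)" by transfer (rule gmul_assoc)
  show "1 * a = a" by transfer (rule gmul_gone_left)
  show "a * 1 = a" by transfer (rule gmul_gone_right)
  show "(a + b) * c = a * c + b * c" by transfer (rule gmul_add_left)
  show "a * (b + c) = a * b + a * c" by transfer (rule gmul_add_right)
  show "a + b + c = a + (b + c)" by transfer (simp add: add.assoc)
  show "a + b = b + a" by transfer (simp add: add.commute)
  show "0 + a = a" by transfer simp
  show "- a + a = 0" by transfer simp
  show "a - b = a + - b" by transfer simp
  show "(0::'a grassmann) \<noteq> 1" by transfer (simp add: gone_def fun_eq_iff)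
qed

end

lemma Rep_grassmann_infinite: "infinite S \<Longrightarrow> Rep_grassmann a S = 0"
  using Rep_grassmann[of a] by auto

lemma Rep_grassmann_sum: "finite F \<Longrightarrow> Rep_grassmann (sum f F) U = (\<Sum>S\<in>F. Rep_grassmann (f S) U)"
  by (induction F rule: finite_induct) (auto simp: zero_grassmann.rep_eq plus_grassmann.rep_eq)

lemma gmul_neq_0_imp:
  assumes "gmul a b U \<noteq> 0"
  shows "finite U \<and> (\<exists>S\<subseteq>U. a S \<noteq> 0 \<and> b (U - S) \<noteq> 0)"
proof -
  have U: "finite U" using assms by (auto simp: gmul_def split: if_splits)
  then have "(\<Sum>S\<in>Pow U. of_int (gsign S (U - S)) * a S * b (U - S)) \<noteq> 0"
    using assms by (simp add: gmul_def)
  then obtain S where "S \<in> Pow U" "of_int (gsign S (U - S)) * a S * b (U - S) \<noteq> 0"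
    by (meson sum.neutral)
  then show ?thesis using U by auto
qed

lift_definition gmonom :: "nat set \<Rightarrow> 'a::field \<Rightarrow> 'a grassmann" is
  "\<lambda>S c T. if T = S \<and> finite S then c else 0" by auto

lemma gmonom_0 [simp]: "gmonom S 0 = 0"
  by transfer simp

lemma gmonom_mult:
  assumes "finite S" "finite T"
  shows "gmonom S c * gmonom T d =
    (if S \<inter> T = {} then gmonom (S \<union> T) (of_int (gsign S T) * c * d) else 0)"
proof (rule Rep_grassmann_inject[THEN iffD1], rule ext)
  fix U
  show "Rep_grassmann (gmonom S c * gmonom T d) U =
    Rep_grassmann (if S \<inter> T = {} then gmonom (S \<union> T) (of_int (gsign S T) * c * d) else 0) U"
  proof (cases "finite U")
    case True
    have "Rep_grassmann (gmonom S c * gmonom T d) U = (\<Sum>R\<in>Pow U.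
        of_int (gsign R (U - R)) * (if R = S then c else 0) * (if U - R = T then d else 0))"
      using True assms by (simp add: times_grassmann.rep_eq gmonom.rep_eq gmul_def)
    also have "\<dots> = (\<Sum>R\<in>Pow U.
        if R = S then (if U - S = T then of_int (gsign S T) * c * d else 0) else 0)"
      by (rule sum.cong) auto
    also have "\<dots> = (if S \<subseteq> U \<and> U - S = T then of_int (gsign S T) * c * d else 0)"
      using True by (simp add: sum.delta)
    finally show ?thesis
      using assms by (auto simp: gmonom.rep_eq zero_grassmann.rep_eq)
  qed (simp add: Rep_grassmann_infinite)
qed

lemma gmonom_mult_disjoint:
  assumes "finite S" "finite T" "S \<inter> T = {}" "c \<noteq> 0" "d \<noteq> 0"
  obtains e where "e \<noteq> 0" "gmonom S c * gmonom T d = gmonom (S \<union> T) e"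
proof (rule that)
  show "of_int (gsign S T) * c * d \<noteq> 0"
    using assms(4,5) of_int_gsign_neq_0 by simp
  show "gmonom S c * gmonom T d = gmonom (S \<union> T) (of_int (gsign S T) * c * d)"
    using gmonom_mult[OF assms(1,2)] assms(3) by simp
qed

lemma gmonom_square:
  "finite S \<Longrightarrow> S \<noteq> {} \<Longrightarrow> gmonom S c * gmonom S c = 0"
  by (simp add: gmonom_mult)

lemma prod_list_gmonom_disjoint:
  assumes "\<forall>S\<in>set Ss. finite S" "sorted_wrt (\<lambda>S T. S \<inter> T = {}) Ss"
  obtains c where "c \<noteq> 0" "prod_list (map (\<lambda>S. gmonom S 1) Ss) = gmonom (\<Union>(set Ss)) (c::'a::field)"
  using assms
proof (induction Ss arbitrary: thesis)
  case Nil
  have "(1 :: 'a grassmann) = gmonom {} 1"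
    by transfer (simp add: gone_def fun_eq_iff)
  then show ?case using Nil(1)[of 1] by simp
next
  case (Cons S Ss)
  obtain c where c: "c \<noteq> 0" "prod_list (map (\<lambda>S. gmonom S 1) Ss) = gmonom (\<Union>(set Ss)) (c::'a)"
    using Cons by auto
  moreover have "finite S" "finite (\<Union>(set Ss))" "S \<inter> \<Union>(set Ss) = {}"
    using Cons.prems by auto
  ultimately obtain e where "e \<noteq> 0" "gmonom S 1 * gmonom (\<Union>(set Ss)) c = gmonom (S \<union> \<Union>(set Ss)) e"
    using gmonom_mult_disjoint[of S "\<Union>(set Ss)" 1 c] by auto
  then show ?case using Cons.prems(1)[of e] c by simp
qed

lemma Rep_gmonom_empty_mult: "Rep_grassmann (gmonom {} c * z) = (\<lambda>S. c * Rep_grassmann z S)"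
proof
  fix U
  show "Rep_grassmann (gmonom {} c * z) U = c * Rep_grassmann z U"
  proof (cases "finite U")
    case True
    then have "Rep_grassmann (gmonom {} c * z) U = (\<Sum>S\<in>Pow U.
        of_int (gsign S (U - S)) * (if S = {} then c else 0) * Rep_grassmann z (U - S))"
      by (simp add: times_grassmann.rep_eq gmul_def gmonom.rep_eq)
    also have "\<dots> = (\<Sum>S\<in>Pow U. if S = {} then c * Rep_grassmann z U else 0)"
      by (rule sum.cong) auto
    finally show ?thesis using True by simp
  qed (simp add: Rep_grassmann_infinite)
qed

lemma gmonom_empty_commute: "gmonom {} c * z = z * gmonom {} c"
proof (rule Rep_grassmann_inject[THEN iffD1], rule ext)
  fix U
  show "Rep_grassmann (gmonom {} c * z) U = Rep_grassmann (z * gmonom {} c) U"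
  proof (cases "finite U")
    case True
    then have "Rep_grassmann (z * gmonom {} c) U = (\<Sum>S\<in>Pow U.
        of_int (gsign S (U - S)) * Rep_grassmann z S * (if U - S = {} then c else 0))"
      by (simp add: times_grassmann.rep_eq gmul_def gmonom.rep_eq)
    also have "\<dots> = (\<Sum>S\<in>Pow U. if S = U then c * Rep_grassmann z U else 0)"
      by (rule sum.cong) auto
    finally show ?thesis using True by (simp add: Rep_gmonom_empty_mult)
  qed (simp add: Rep_grassmann_infinite)
qed

lemma one_eq_gmonom: "1 = gmonom {} (1::'a::field)"
  by transfer (simp add: gone_def fun_eq_iff)

lemma gmonom_add: "gmonom S a + gmonom S b = gmonom S (a + b)"
  and gmonom_diff: "gmonom S a - gmonom S b = gmonom S (a - b)"
  by (transfer, simp add: fun_eq_iff)+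

lemma of_int_eq_gmonom: "of_int k = gmonom {} (of_int k :: 'a::field)"
  by (induction k rule: int_induct[of _ 0])
    (simp_all add: one_eq_gmonom gmonom_add gmonom_diff)

lemma of_nat_eq_gmonom: "of_nat n = gmonom {} (of_nat n :: 'a::field)"
  using of_int_eq_gmonom[of "int n"] by simp

lemma Rep_of_int_mult: "Rep_grassmann (of_int k * z) = (\<lambda>S. of_int k * Rep_grassmann z S)"
  by (simp add: of_int_eq_gmonom Rep_gmonom_empty_mult)

lemma gmonom_decomposition:
  assumes "finite {S. Rep_grassmann a S \<noteq> 0}"
  shows "a = (\<Sum>S | Rep_grassmann a S \<noteq> 0. gmonom S (Rep_grassmann a S))"
proof (rule Rep_grassmann_inject[THEN iffD1], rule ext)
  fix U
  have "(\<Sum>S | Rep_grassmann a S \<noteq> 0. Rep_grassmann (gmonom S (Rep_grassmann a S)) U) =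
    (\<Sum>S | Rep_grassmann a S \<noteq> 0. if U = S then Rep_grassmann a S else 0)"
    by (intro sum.cong) (auto simp: gmonom.rep_eq Rep_grassmann_infinite)
  also have "\<dots> = Rep_grassmann a U"
    using assms by (simp add: sum.delta')
  finally show "Rep_grassmann a U =
    Rep_grassmann (\<Sum>S | Rep_grassmann a S \<noteq> 0. gmonom S (Rep_grassmann a S)) U"
    by (simp add: Rep_grassmann_sum[OF assms])
qed

definition grass_homog :: "nat \<Rightarrow> 'a::field grassmann \<Rightarrow> bool" where
  "grass_homog n a \<longleftrightarrow> (\<forall>S. Rep_grassmann a S \<noteq> 0 \<longrightarrow> card S = n)"

lemma grass_homog_gmonom: "grass_homog (card S) (gmonom S c)"
  by (simp add: grass_homog_def gmonom.rep_eq)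

lemma grass_homog_one: "grass_homog 0 (1::'a::field grassmann)"
  using grass_homog_gmonom[of "{}" "1::'a"] by (simp add: one_eq_gmonom)

lemma grass_homog_mult:
  assumes "grass_homog m a" "grass_homog n b"
  shows "grass_homog (m + n) (a * b)"
  unfolding grass_homog_def
proof (intro allI impI)
  fix U assume "Rep_grassmann (a * b) U \<noteq> 0"
  then obtain S where S: "finite U" "S \<subseteq> U" "Rep_grassmann a S \<noteq> 0" "Rep_grassmann b (U - S) \<noteq> 0"
    using gmul_neq_0_imp[of "Rep_grassmann a" "Rep_grassmann b" U]
    unfolding times_grassmann.rep_eq by blast
  then have "card U = card S + card (U - S)"
    by (metis card_Diff_subset card_mono finite_subset le_add_diff_inverse)
  then show "card U = m + n"
    using assms S by (auto simp: grass_homog_def)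
qed

lemma grass_homog_commute:
  assumes "grass_homog m a" "grass_homog n b"
  shows "a * b = of_int ((-1) ^ (m * n)) * (b * a)"
proof (rule Rep_grassmann_inject[THEN iffD1], rule ext)
  fix U
  show "Rep_grassmann (a * b) U = Rep_grassmann (of_int ((-1) ^ (m * n)) * (b * a)) U"
  proof (cases "finite U")
    case True
    let ?a = "Rep_grassmann a" and ?b = "Rep_grassmann b"
    have "Rep_grassmann (a * b) U = (\<Sum>S\<in>Pow U. of_int (gsign S (U - S)) * ?a S * ?b (U - S))"
      using True by (simp add: times_grassmann.rep_eq gmul_def)
    also have "\<dots> = (\<Sum>S\<in>Pow U. of_int ((-1) ^ (m * n)) *
        (of_int (gsign (U - S) (U - (U - S))) * ?b (U - S) * ?a (U - (U - S))))"
    proof (rule sum.cong[OF refl])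
      fix S assume S: "S \<in> Pow U"
      then have e: "U - (U - S) = S" by auto
      show "of_int (gsign S (U - S)) * ?a S * ?b (U - S) = of_int ((-1) ^ (m * n)) *
        (of_int (gsign (U - S) (U - (U - S))) * ?b (U - S) * ?a (U - (U - S)))"
      proof (cases "?a S \<noteq> 0 \<and> ?b (U - S) \<noteq> 0")
        case True
        then have "card S = m" "card (U - S) = n" using assms by (auto simp: grass_homog_def)
        moreover have "finite S" "finite (U - S)" using S \<open>finite U\<close> finite_subset by auto
        ultimately have "gsign S (U - S) = (-1) ^ (m * n) * gsign (U - S) S"
          using gsign_swap[of S "U - S"] by auto
        then show ?thesis unfolding e by (simp add: algebra_simps)
      qed (auto simp: e)
    qed
    also have "\<dots> = of_int ((-1) ^ (m * n)) * (\<Sum>S\<in>Pow U. of_int (gsign S (U - S)) * ?b S * ?a (U - S))"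
      unfolding sum_distrib_left
      by (rule sum.reindex_bij_witness[of _ "\<lambda>S. U - S" "\<lambda>S. U - S"]) auto
    also have "\<dots> = Rep_grassmann (of_int ((-1) ^ (m * n)) * (b * a)) U"
      by (simp only: Rep_of_int_mult) (simp add: times_grassmann.rep_eq gmul_def True)
    finally show ?thesis .
  qed (simp add: Rep_grassmann_infinite)
qed

lemma grass_homog_odd_square:
  assumes "grass_homog n a" "odd n" "(2::'a::field) \<noteq> 0"
  shows "a * a = (0 :: 'a grassmann)"
proof -
  have "a * a = of_int ((-1) ^ (n * n)) * (a * a)"
    by (rule grass_homog_commute[OF assms(1,1)])
  then have "a * a = - (a * a)"
    using assms(2) by (simp add: minus_one_power_iff)
  then have "2 * (a * a) = 0"
    by (metis mult_2 add_eq_0_iff)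
  then have "Rep_grassmann (a * a) = Rep_grassmann 0"
    using Rep_of_int_mult[of 2 "a * a"] assms(3) by (auto simp: fun_eq_iff zero_grassmann.rep_eq)
  then show ?thesis by (simp add: Rep_grassmann_inject)
qed

lemma grass_homog_even_power_char:
  assumes "grass_homog n a" "even n" "n > 0" "finite {S. Rep_grassmann a S \<noteq> 0}"
    and "of_nat p = (0::'a::field)" "p > 0"
  shows "a ^ p = (0 :: 'a grassmann)"
proof -
  let ?F = "{S. Rep_grassmann a S \<noteq> 0}" and ?m = "\<lambda>S. gmonom S (Rep_grassmann a S)"
  have card: "card S = n" if "S \<in> ?F" for S using assms(1) that by (auto simp: grass_homog_def)
  have "(sum ?m ?F) ^ p = 0"
  proof (rule power_sum_squares_zero_char[OF assms(4)])
    fix S T assume "S \<in> ?F" "T \<in> ?F"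
    then have "grass_homog n (?m S)" "grass_homog n (?m T)"
      using grass_homog_gmonom card by metis+
    from grass_homog_commute[OF this] show "?m S * ?m T = ?m T * ?m S"
      using assms(2) by simp
  next
    fix S assume "S \<in> ?F"
    then show "?m S * ?m S = 0"
      using card assms(3) Rep_grassmann_infinite by (intro gmonom_square) force+
  next
    show "of_nat p = (0 :: 'a grassmann)" using assms(5) by (simp add: of_nat_eq_gmonom)
  qed (use assms(6) in simp)
  then show ?thesis using gmonom_decomposition[OF assms(4)] by simp
qed

definition pmonom :: "var list \<Rightarrow> 'a::field fpoly" where
  "pmonom w = (\<lambda>u. if u = w then 1 else 0)"

lemma pvar_eq_pmonom: "pvar x = pmonom [x]"
  by (simp add: pvar_def pmonom_def)

lemma pone_eq_pmonom: "pone = pmonom []"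
  by (simp add: pone_def pmonom_def)

lemma fpoly_pmonom: "fpoly (pmonom w)"
  unfolding fpoly_def by (rule finite_subset[of _ "{w}"]) (auto simp: pmonom_def)

lemma pmul_pmonom: "pmul (pmonom u) (pmonom v) = (pmonom (u @ v) :: 'a::field fpoly)"
proof
  fix w
  have split: "(take i w = u \<and> drop i w = v) \<longleftrightarrow> (i = length u \<and> w = u @ v)"
    if "i \<le> length w" for i
    using that by (metis append_eq_conv_conj append_take_drop_id length_take min.absorb2)
  have "pmul (pmonom u) (pmonom v) w = (\<Sum>i\<le>length w. if take i w = u \<and> drop i w = v then 1 else (0::'a))"
    unfolding pmul_def pmonom_def by (intro sum.cong) auto
  also have "\<dots> = (\<Sum>i\<le>length w. if i = length u then (if w = u @ v then 1 else 0) else 0)"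
    using split by (intro sum.cong refl) simp
  also have "\<dots> = pmonom (u @ v) w"
    by (simp add: pmonom_def)
  finally show "pmul (pmonom u) (pmonom v) w = (pmonom (u @ v) w :: 'a)" .
qed

lemma pmul_psub_left: "pmul (psub f g) h = psub (pmul f h) (pmul g h)"
  and pmul_psub_right: "pmul f (psub g h) = psub (pmul f g) (pmul f h)"
  and pmul_psmult_left: "pmul (psmult c f) g = psmult c (pmul f g)"
  and pmul_psmult_right: "pmul f (psmult c g) = psmult c (pmul f g)"
  by (simp_all add: fun_eq_iff pmul_def psub_def psmult_def algebra_simps sum_subtractf
      sum_distrib_left)

lemma ppow_pvar: "ppow (pvar x) n = (pmonom (replicate n x) :: 'a::field fpoly)"
  by (induction n) (simp_all add: ppow_def pvar_eq_pmonom pone_eq_pmonom pmul_pmonom)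

lemma pideal_zero: "pideal I \<Longrightarrow> pzero \<in> I"
  and pideal_padd: "pideal I \<Longrightarrow> f \<in> I \<Longrightarrow> g \<in> I \<Longrightarrow> padd f g \<in> I"
  and pideal_psmult: "pideal I \<Longrightarrow> f \<in> I \<Longrightarrow> psmult c f \<in> I"
  and pideal_pmul_left: "pideal I \<Longrightarrow> f \<in> I \<Longrightarrow> fpoly g \<Longrightarrow> pmul g f \<in> I"
  and pideal_pmul_right: "pideal I \<Longrightarrow> f \<in> I \<Longrightarrow> fpoly g \<Longrightarrow> pmul f g \<in> I"
  unfolding pideal_def by blast+

lemma sum_fun_apply: "sum g A u = (\<Sum>a\<in>A. g a u)"
  by (induction A rule: infinite_finite_induct) auto

lemma pideal_sum:
  assumes "pideal I" "finite A" "\<And>a. a \<in> A \<Longrightarrow> g a \<in> I"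
  shows "sum g A \<in> I"
  using assms(2,3)
proof (induction A rule: finite_induct)
  case empty
  then show ?case using pideal_zero[OF assms(1)] by (simp add: pzero_def zero_fun_def)
next
  case (insert a A)
  then show ?case
    using pideal_padd[OF assms(1), of "g a" "sum g A"] by (simp add: padd_def plus_fun_def)
qed

text \<open>The coefficient sums below are over the fibres of \<open>map \<rho>\<close>; they are meaningful
  (and not the junk value 0 of an infinite sum) only when the fibres of \<open>\<rho>\<close> are finite.\<close>

definition prename :: "(var \<Rightarrow> var) \<Rightarrow> 'a::field fpoly \<Rightarrow> 'a fpoly" where
  "prename \<rho> f = (\<lambda>w. sum f {u. map \<rho> u = w})"

lemma finite_map_fibre:
  assumes "\<And>v. finite {u. \<rho> u = v}"
  shows "finite {u. map \<rho> u = w}"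
proof -
  have "finite (\<Union>v\<in>set w. {u. \<rho> u = v})" using assms by auto
  moreover have "{u. map \<rho> u = w} \<subseteq>
      {us. set us \<subseteq> (\<Union>v\<in>set w. {u. \<rho> u = v}) \<and> length us = length w}"
    by auto
  ultimately show ?thesis using finite_lists_length_eq finite_subset by blast
qed

lemma prename_pmul:
  "prename \<rho> (pmul f g) = pmul (prename \<rho> f) (prename \<rho> g)"
proof
  fix w
  have "prename \<rho> (pmul f g) w =
      (\<Sum>i\<le>length w. \<Sum>u\<in>{u. map \<rho> u = w}. f (take i u) * g (drop i u))"
    unfolding prename_def pmul_def by (subst sum.swap) (rule sum.cong, auto)
  also have "\<dots> = (\<Sum>i\<le>length w. prename \<rho> f (take i w) * prename \<rho> g (drop i w))"
  proof (rule sum.cong[OF refl])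
    fix i assume "i \<in> {..length w}"
    then have len: "map \<rho> u = take i w \<Longrightarrow> length u = i" for u
      by (metis atMost_iff length_map length_take min.absorb2)
    have "prename \<rho> f (take i w) * prename \<rho> g (drop i w) =
        (\<Sum>(u, v)\<in>{u. map \<rho> u = take i w} \<times> {v. map \<rho> v = drop i w}. f u * g v)"
      by (simp add: prename_def sum_product sum.cartesian_product)
    also have "\<dots> = (\<Sum>u\<in>{u. map \<rho> u = w}. f (take i u) * g (drop i u))"
      by (rule sum.reindex_bij_witness[of _ "\<lambda>u. (take i u, drop i u)" "\<lambda>(u, v). u @ v"])
        (auto simp: len simp flip: take_map drop_map)
    finally show "(\<Sum>u\<in>{u. map \<rho> u = w}. f (take i u) * g (drop i u)) =
        prename \<rho> f (take i w) * prename \<rho> g (drop i w)" ..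
  qed
  finally show "prename \<rho> (pmul f g) w = pmul (prename \<rho> f) (prename \<rho> g) w"
    by (simp add: pmul_def)
qed

lemma prename_pmonom:
  assumes "\<And>v. finite {u. \<rho> u = v}"
  shows "prename \<rho> (pmonom u) = pmonom (map \<rho> u)"
proof
  fix w
  show "prename \<rho> (pmonom u) w = pmonom (map \<rho> u) w"
  proof (cases "map \<rho> u = w")
    case True
    then show ?thesis
      using finite_map_fibre[OF assms] by (simp add: prename_def pmonom_def sum.delta')
  qed (auto simp: prename_def pmonom_def intro!: sum.neutral)
qed

lemma prename_padd: "prename \<rho> (padd f g) = padd (prename \<rho> f) (prename \<rho> g)"
  by (simp add: prename_def padd_def sum.distrib fun_eq_iff)

lemma graded_endo_prename:
  assumes fibres: "\<And>v. finite {u. \<rho> u = v}" and deg: "\<And>u. alpha (\<rho> u) = alpha u"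
  shows "graded_endo (prename \<rho> :: 'a::field fpoly \<Rightarrow> 'a fpoly)"
proof -
  have supp: "{w. prename \<rho> f w \<noteq> 0} \<subseteq> map \<rho> ` {w. f w \<noteq> 0}" for f :: "'a fpoly"
  proof
    fix w assume "w \<in> {w. prename \<rho> f w \<noteq> 0}"
    then obtain u where "map \<rho> u = w" "f u \<noteq> 0"
      unfolding prename_def by (meson mem_Collect_eq sum.neutral)
    then show "w \<in> map \<rho> ` {w. f w \<noteq> 0}" by auto
  qed
  then have fpoly: "fpoly f \<Longrightarrow> fpoly (prename \<rho> f)" for f :: "'a fpoly"
    unfolding fpoly_def using finite_subset by blast
  have "word_deg (map \<rho> w) = word_deg w" for w
    by (induction w) (simp_all add: word_deg_def deg)
  then have "homog i f \<Longrightarrow> homog i (prename \<rho> f)" for i and f :: "'a fpoly"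
    using supp fpoly unfolding homog_def by blast
  moreover have "prename \<rho> (psmult c f) = psmult c (prename \<rho> f)" for c and f :: "'a fpoly"
    by (simp add: prename_def psmult_def sum_distrib_left fun_eq_iff)
  moreover have "prename \<rho> pone = (pone :: 'a fpoly)"
    by (simp add: pone_eq_pmonom prename_pmonom[OF fibres])
  ultimately show ?thesis
    unfolding graded_endo_def by (simp add: fpoly prename_padd prename_pmul)
qed

lemma fpoly_eq_sum_reduced_words:
  fixes f :: "'a::field fpoly"
  assumes "fpoly f" "\<And>u. (\<Sum>w | f w \<noteq> 0 \<and> m w = u. f w * of_int (c w)) = 0"
  shows "f = (\<Sum>w | f w \<noteq> 0. psmult (f w) (psub (pmonom w) (psmult (of_int (c w)) (pmonom (m w)))))"
proof
  fix u
  let ?W = "{w. f w \<noteq> 0}"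
  have fin: "finite ?W" using assms(1) by (simp add: fpoly_def)
  have "(\<Sum>w\<in>?W. psmult (f w) (psub (pmonom w) (psmult (of_int (c w)) (pmonom (m w))))) u
      = (\<Sum>w\<in>?W. f w * pmonom w u) - (\<Sum>w\<in>?W. f w * of_int (c w) * pmonom (m w) u)"
    by (simp add: sum_fun_apply psmult_def psub_def algebra_simps sum_subtractf)
  also have "(\<Sum>w\<in>?W. f w * pmonom w u) = f u"
    using fin by (simp add: pmonom_def if_distrib sum.delta' cong: if_cong)
  also have "(\<Sum>w\<in>?W. f w * of_int (c w) * pmonom (m w) u) = (\<Sum>w | f w \<noteq> 0 \<and> m w = u. f w * of_int (c w))"
    using fin by (intro sum.mono_neutral_cong_right) (auto simp: pmonom_def)
  also have "\<dots> = 0"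
    by (rule assms(2))
  finally show "f u = (\<Sum>w\<in>?W. psmult (f w) (psub (pmonom w) (psmult (of_int (c w)) (pmonom (m w))))) u"
    by simp
qed

definition Ecan_subst :: "(var \<Rightarrow> 'a::field grass) \<Rightarrow> bool" where
  "Ecan_subst \<phi> \<longleftrightarrow> (\<forall>x. \<phi> x \<in> Ecan_comp (alpha x))"

definition eval_var :: "(var \<Rightarrow> 'a::field grass) \<Rightarrow> var \<Rightarrow> 'a grassmann" where
  "eval_var \<phi> x = Abs_grassmann (\<phi> x)"

definition eval_word :: "(var \<Rightarrow> 'a::field grass) \<Rightarrow> var list \<Rightarrow> 'a grassmann" where
  "eval_word \<phi> w = prod_list (map (eval_var \<phi>) w)"

lemma eval_word_Nil [simp]: "eval_word \<phi> [] = 1"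
  and eval_word_Cons [simp]: "eval_word \<phi> (x # w) = eval_var \<phi> x * eval_word \<phi> w"
  and eval_word_append [simp]: "eval_word \<phi> (u @ v) = eval_word \<phi> u * eval_word \<phi> v"
  by (simp_all add: eval_word_def)

lemma Ecan_substD: "Ecan_subst \<phi> \<Longrightarrow> \<phi> x \<in> Ecan_comp (alpha x)"
  unfolding Ecan_subst_def by blast

lemma Rep_eval_var: "Ecan_subst \<phi> \<Longrightarrow> Rep_grassmann (eval_var \<phi> x) = \<phi> x"
  unfolding eval_var_def using Ecan_substD[of \<phi> x]
  by (intro Abs_grassmann_inverse) (auto simp: Ecan_comp_def gzero_def grass_def split: if_splits)

lemma Rep_eval_word: "Ecan_subst \<phi> \<Longrightarrow> Rep_grassmann (eval_word \<phi> w) = gprod (map \<phi> w)"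
  by (induction w) (simp_all add: one_grassmann.rep_eq times_grassmann.rep_eq Rep_eval_var)

lemma eval_var_neg: "Ecan_subst \<phi> \<Longrightarrow> alpha x < 0 \<Longrightarrow> eval_var \<phi> x = 0"
  by (rule Rep_grassmann_inject[THEN iffD1])
    (use Ecan_substD[of \<phi> x] in \<open>auto simp: Rep_eval_var zero_grassmann.rep_eq Ecan_comp_def gzero_def\<close>)

lemma grass_homog_eval_var:
  "Ecan_subst \<phi> \<Longrightarrow> alpha x \<ge> 0 \<Longrightarrow> grass_homog (nat (alpha x)) (eval_var \<phi> x)"
  using Ecan_substD[of \<phi> x] by (auto simp: grass_homog_def Rep_eval_var Ecan_comp_def)

lemma finite_support_eval_var:
  "Ecan_subst \<phi> \<Longrightarrow> finite {S. Rep_grassmann (eval_var \<phi> x) S \<noteq> 0}"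
  using Ecan_substD[of \<phi> x]
  by (auto simp: Rep_eval_var Ecan_comp_def gzero_def grass_def split: if_splits)

lemma grass_homog_eval_word:
  assumes "Ecan_subst \<phi>" "\<forall>x\<in>set w. alpha x \<ge> 0"
  shows "grass_homog (\<Sum>x\<leftarrow>w. nat (alpha x)) (eval_word \<phi> w)"
  using assms(2)
  by (induction w) (simp_all add: grass_homog_one grass_homog_mult grass_homog_eval_var assms(1))

lemma eval_word_Cons_neq_0:
  assumes "Ecan_subst \<phi>" "Rep_grassmann (eval_word \<phi> (y # w)) U \<noteq> 0"
  obtains S where "S \<subseteq> U" "\<phi> y S \<noteq> 0" "Rep_grassmann (eval_word \<phi> w) (U - S) \<noteq> 0"
  using assms gmul_neq_0_imp[of "\<phi> y" "Rep_grassmann (eval_word \<phi> w)" U]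
  by (auto simp: times_grassmann.rep_eq Rep_eval_var)

section \<open>Reduction of words to normal form\<close>

definition word_reduces :: "'a::field fpoly set \<Rightarrow> var list \<Rightarrow> int \<Rightarrow> var list \<Rightarrow> bool" where
  "word_reduces I w c m \<longleftrightarrow> psub (pmonom w) (psmult (of_int c) (pmonom m)) \<in> I \<and>
     (\<forall>\<phi> :: var \<Rightarrow> 'a grass. Ecan_subst \<phi> \<longrightarrow> eval_word \<phi> w = of_int c * eval_word \<phi> m)"

lemma word_reduces_refl: "pideal I \<Longrightarrow> word_reduces I w 1 w"
  using pideal_zero by (fastforce simp: word_reduces_def psub_def psmult_def pzero_def)

lemma word_reduces_Cons:
  fixes I :: "'a::field fpoly set"
  assumes "pideal I" "word_reduces I w c m"
  shows "word_reduces I (y # w) c (y # m)"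
proof -
  have "pmul (pmonom [y]) (psub (pmonom w) (psmult (of_int c) (pmonom m))) \<in> I"
    using assms by (auto simp: word_reduces_def intro!: pideal_pmul_left fpoly_pmonom)
  moreover have "eval_var \<phi> y * (of_int c * eval_word \<phi> m) = of_int c * (eval_var \<phi> y * eval_word \<phi> m)"
    for \<phi> :: "var \<Rightarrow> 'a grass"
    by (metis mult.assoc mult_of_int_commute)
  ultimately show ?thesis
    using assms(2) by (simp add: word_reduces_def pmul_psub_right pmul_psmult_right pmul_pmonom)
qed

lemma word_reduces_append:
  fixes I :: "'a::field fpoly set"
  assumes "pideal I" "word_reduces I w c m"
  shows "word_reduces I (w @ r) c (m @ r)"
proof -
  have "pmul (psub (pmonom w) (psmult (of_int c) (pmonom m))) (pmonom r) \<in> I"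
    using assms by (auto simp: word_reduces_def intro!: pideal_pmul_right fpoly_pmonom)
  then show ?thesis
    using assms(2) by (simp add: word_reduces_def pmul_psub_left pmul_psmult_left pmul_pmonom mult.assoc)
qed

lemma word_reduces_trans:
  fixes I :: "'a::field fpoly set"
  assumes "pideal I" "word_reduces I w c u" "word_reduces I u d m"
  shows "word_reduces I w (c * d) m"
proof -
  have "(psub (pmonom w) (psmult (of_int (c * d)) (pmonom m)) :: 'a fpoly) =
     padd (psub (pmonom w) (psmult (of_int c) (pmonom u)))
       (psmult (of_int c) (psub (pmonom u) (psmult (of_int d) (pmonom m))))"
    by (simp add: psub_def padd_def psmult_def fun_eq_iff algebra_simps)
  then show ?thesis
    using assms by (auto simp: word_reduces_def mult.assoc intro!: pideal_padd pideal_psmult)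
qed

lemma word_reduces_zero:
  fixes I :: "'a::field fpoly set"
  assumes "pideal I" "pmonom u \<in> I" "\<And>\<phi> :: var \<Rightarrow> 'a grass. Ecan_subst \<phi> \<Longrightarrow> eval_word \<phi> u = 0"
  shows "word_reduces I (u @ w) 0 m"
proof -
  have "pmul (pmonom u) (pmonom w) \<in> I"
    using assms(1,2) fpoly_pmonom by (rule pideal_pmul_right)
  then show ?thesis
    using assms(3) by (simp add: word_reduces_def psub_def psmult_def pmul_pmonom)
qed

lemma peval_eq_sum_reduced_words:
  fixes \<phi> :: "var \<Rightarrow> 'a::field grass" and I :: "'a fpoly set"
  assumes "Ecan_subst \<phi>" "fpoly f" "\<And>w. word_reduces I w (c w) (m w)"
  shows "peval \<phi> f U = (\<Sum>u \<in> m ` {w. f w \<noteq> 0 \<and> c w \<noteq> 0}.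
    (\<Sum>w | f w \<noteq> 0 \<and> m w = u. f w * of_int (c w)) * Rep_grassmann (eval_word \<phi> u) U)"
proof -
  let ?W = "{w. f w \<noteq> 0}"
  have fin: "finite ?W" using assms(2) by (simp add: fpoly_def)
  have "peval \<phi> f U = (\<Sum>w\<in>?W. f w * Rep_grassmann (eval_word \<phi> w) U)"
    by (simp add: peval_def Rep_eval_word[OF assms(1)])
  also have "\<dots> = (\<Sum>w\<in>?W. f w * of_int (c w) * Rep_grassmann (eval_word \<phi> (m w)) U)"
  proof (rule sum.cong[OF refl])
    fix w
    have "eval_word \<phi> w = of_int (c w) * eval_word \<phi> (m w)"
      using assms(1) assms(3)[of w] by (simp add: word_reduces_def)
    then show "f w * Rep_grassmann (eval_word \<phi> w) U = f w * of_int (c w) * Rep_grassmann (eval_word \<phi> (m w)) U"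
      by (simp add: Rep_of_int_mult)
  qed
  also have "\<dots> = (\<Sum>w | f w \<noteq> 0 \<and> c w \<noteq> 0. f w * of_int (c w) * Rep_grassmann (eval_word \<phi> (m w)) U)"
    using fin by (intro sum.mono_neutral_right) auto
  also have "\<dots> = (\<Sum>u \<in> m ` {w. f w \<noteq> 0 \<and> c w \<noteq> 0}. \<Sum>w | f w \<noteq> 0 \<and> c w \<noteq> 0 \<and> m w = u.
      f w * of_int (c w) * Rep_grassmann (eval_word \<phi> (m w)) U)"
    using fin by (subst sum.image_gen) (auto intro!: sum.cong)
  also have "\<dots> = (\<Sum>u \<in> m ` {w. f w \<noteq> 0 \<and> c w \<noteq> 0}.
      (\<Sum>w | f w \<noteq> 0 \<and> m w = u. f w * of_int (c w)) * Rep_grassmann (eval_word \<phi> u) U)"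
    unfolding sum_distrib_right using fin
    by (intro sum.cong[OF refl] sum.mono_neutral_cong_left) auto
  finally show ?thesis .
qed

definition normal_word :: "nat \<Rightarrow> var list \<Rightarrow> bool" where
  "normal_word p m \<longleftrightarrow> sorted m \<and> (\<forall>z\<in>set m. alpha z \<ge> 0) \<and>
     (\<forall>z. odd (alpha z) \<longrightarrow> count (mset m) z \<le> 1) \<and>
     (\<forall>z. even (alpha z) \<and> alpha z \<ge> 1 \<longrightarrow> count (mset m) z < p)"

lemma normal_wordD:
  assumes "normal_word p m"
  shows "sorted m" and "z \<in> set m \<Longrightarrow> alpha z \<ge> 0"
    and "odd (alpha z) \<Longrightarrow> count (mset m) z \<le> 1"
    and "even (alpha z) \<Longrightarrow> alpha z \<ge> 1 \<Longrightarrow> count (mset m) z < p"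
  using assms unfolding normal_word_def by blast+

lemma normal_word_Nil: "p > 0 \<Longrightarrow> normal_word p []"
  by (simp add: normal_word_def)

lemma normal_word_ConsD:
  assumes "normal_word p (y # m)"
  shows "normal_word p m"
proof -
  have "count (mset m) z \<le> count (mset (y # m)) z" for z
    by simp
  then show ?thesis
    using assms unfolding normal_word_def by (meson le_trans le_less_trans list.set_intros(2) sorted_simps(2))
qed

lemma normal_word_Cons:
  assumes "normal_word p m" "sorted (x # m)" "alpha x \<ge> 0" "odd (alpha x) \<Longrightarrow> x \<notin> set m"
    and "even (alpha x) \<Longrightarrow> alpha x \<ge> 1 \<Longrightarrow> count (mset m) x + 1 < p"
  shows "normal_word p (x # m)"
  using assms unfolding normal_word_def by (auto simp: count_mset_0_iff)

lemma normal_word_Cons_swap: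
  assumes "normal_word p (y # m)" "normal_word p m'" "mset m' = mset (x # m)" "y < x"
  shows "normal_word p (y # m')"
proof -
  have "set m' = insert x (set m)"
    by (metis assms(3) set_mset_mset set_mset_add_mset_insert mset.simps(2))
  then have "sorted (y # m')"
    using assms(1,2,4) by (auto simp: normal_word_def)
  moreover have "count (mset (y # m')) z = count (mset (y # m)) z" if "z \<noteq> x" for z
    using assms(3) that by simp
  moreover have "count (mset (y # m')) x = count (mset m') x"
    using assms(4) by simp
  ultimately show ?thesis
    using assms(1,2) \<open>set m' = insert x (set m)\<close> unfolding normal_word_def by (metis list.set_intros(1) set_ConsD)
qed

lemma sorted_eq_replicate_min_append:
  assumes "sorted m" "\<forall>z\<in>set m. x \<le> z"
  shows "m = replicate (count (mset m) x) x @ filter (\<lambda>z. z \<noteq> x) m"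
  using assms
proof (induction m)
  case (Cons z m)
  show ?case
  proof (cases "z = x")
    case False
    then have "x \<notin> set m" using Cons.prems by fastforce
    then have "filter (\<lambda>z. z \<noteq> x) m = m" by (auto intro: filter_True)
    then show ?thesis using False \<open>x \<notin> set m\<close> by (simp add: count_mset_0_iff)
  qed (use Cons in simp)
qed simp

locale Ecan_TZ_ideal =
  fixes I :: "'a::field fpoly set" and p :: nat
  assumes TZ_ideal: "TZ_ideal I" and gens: "Ecan_gens p \<subseteq> I"
    and char: "CHAR('a) = p" and prime: "prime p" and p_gt_2: "p > 2"
begin

lemma pideal: "pideal I"
  using TZ_ideal by (simp add: TZ_ideal_def)

lemma two_neq_0: "(2::'a) \<noteq> 0"
proof
  assume "(2::'a) = 0"
  then have "of_nat 2 = (0::'a)" by simp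
  then have "p dvd 2"
    using char of_nat_eq_0_iff_char_dvd by metis
  then show False using p_gt_2 by (simp add: dvd_imp_le leD)
qed

lemma of_nat_p_eq_0: "of_nat p = (0::'a)"
  using char of_nat_CHAR by metis

lemma pvar_neg_in: "alpha x < 0 \<Longrightarrow> (pmonom [x] :: 'a fpoly) \<in> I"
  using gens unfolding Ecan_gens_def pvar_eq_pmonom by blast

lemma commutator_in:
  assumes "x \<noteq> y" "even (alpha x) \<or> even (alpha y)"
  shows "(psub (pmonom [x, y]) (pmonom [y, x]) :: 'a fpoly) \<in> I"
proof -
  have "(pcomm (pvar x) (pvar y) :: 'a fpoly) \<in> Ecan_gens p"
    using assms unfolding Ecan_gens_def by blast
  then show ?thesis
    using gens by (auto simp: pcomm_def pvar_eq_pmonom pmul_pmonom)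
qed

lemma anticommutator_in:
  assumes "x \<noteq> y" "odd (alpha x)" "odd (alpha y)"
  shows "(padd (pmonom [x, y]) (pmonom [y, x]) :: 'a fpoly) \<in> I"
proof -
  have "(padd (pmul (pvar x) (pvar y)) (pmul (pvar y) (pvar x)) :: 'a fpoly) \<in> Ecan_gens p"
    using assms unfolding Ecan_gens_def by blast
  then show ?thesis
    using gens by (auto simp: pvar_eq_pmonom pmul_pmonom)
qed

lemma power_in:
  assumes "even (alpha x)" "alpha x \<ge> 1"
  shows "(pmonom (replicate p x) :: 'a fpoly) \<in> I"
proof -
  have "(ppow (pvar x) p :: 'a fpoly) \<in> Ecan_gens p"
    using assms unfolding Ecan_gens_def by blast
  then show ?thesis
    using gens by (auto simp: ppow_pvar)
qed

text \<open>Renaming a second variable \<open>y\<close> of the same degree to \<open>x\<close> turns \<open>xy + yx\<close> into \<open>2x\<^sup>2\<close>.\<close>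

lemma odd_square_in:
  assumes "odd (alpha x)"
  shows "(pmonom [x, x] :: 'a fpoly) \<in> I"
proof -
  define y where "y = (fst x, Suc (snd x))"
  have "x \<noteq> y" "alpha y = alpha x" by (simp_all add: y_def prod_eq_iff alpha_def)
  define \<rho> where "\<rho> = id(y := x)"
  have fibres: "finite {u. \<rho> u = v}" for v
    by (rule finite_subset[of _ "{v, y}"]) (auto simp: \<rho>_def)
  have "alpha (\<rho> u) = alpha u" for u
    by (simp add: \<rho>_def \<open>alpha y = alpha x\<close>)
  then have "prename \<rho> (padd (pmonom [x, y]) (pmonom [y, x])) \<in> I"
    using TZ_ideal anticommutator_in[OF \<open>x \<noteq> y\<close>] assms \<open>alpha y = alpha x\<close>
      graded_endo_prename[OF fibres] by (auto simp: TZ_ideal_def)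
  moreover have "prename \<rho> (padd (pmonom [x, y]) (pmonom [y, x])) = padd (pmonom [x, x]) (pmonom [x, x])"
    using \<open>x \<noteq> y\<close> by (simp only: prename_padd prename_pmonom[OF fibres]) (simp add: \<rho>_def)
  moreover have "psmult (1 / 2) (padd (pmonom [x, x]) (pmonom [x, x])) = (pmonom [x, x] :: 'a fpoly)"
    using two_neq_0 by (simp add: psmult_def padd_def fun_eq_iff pmonom_def)
  ultimately show ?thesis
    using pideal_psmult[OF pideal] by metis
qed

lemma word_reduces_neg_var: "alpha x < 0 \<Longrightarrow> word_reduces I (x # w) 0 m"
  using word_reduces_zero[OF pideal pvar_neg_in, of x w m] by (simp add: eval_var_neg)

lemma word_reduces_odd_square: "odd (alpha x) \<Longrightarrow> word_reduces I (x # x # w) 0 m"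
proof -
  assume odd: "odd (alpha x)"
  have "eval_var \<phi> x * eval_var \<phi> x = 0" if "Ecan_subst \<phi>" for \<phi> :: "var \<Rightarrow> 'a grass"
  proof (cases "alpha x < 0")
    case False
    then have "odd (nat (alpha x))" using odd by (simp add: even_nat_iff)
    then show ?thesis
      using grass_homog_odd_square[OF grass_homog_eval_var[OF that] _ two_neq_0] False by simp
  qed (simp add: eval_var_neg that)
  then show ?thesis
    using word_reduces_zero[OF pideal odd_square_in[OF odd], of w m] by simp
qed

lemma word_reduces_power:
  "even (alpha x) \<Longrightarrow> alpha x \<ge> 1 \<Longrightarrow> word_reduces I (replicate p x @ w) 0 m"
proof -
  assume x: "even (alpha x)" "alpha x \<ge> 1"
  have "eval_word \<phi> (replicate p x) = 0" if "Ecan_subst \<phi>" for \<phi> :: "var \<Rightarrow> 'a grass"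
  proof -
    have "eval_var \<phi> x ^ p = 0"
      using x p_gt_2 grass_homog_even_power_char[OF grass_homog_eval_var[OF that]
          _ _ finite_support_eval_var[OF that] of_nat_p_eq_0]
      by (simp add: even_nat_iff)
    then show ?thesis by (simp add: eval_word_def)
  qed
  then show ?thesis
    using word_reduces_zero[OF pideal power_in[OF x]] by simp
qed

lemma word_reduces_swap:
  assumes "x \<noteq> y" "alpha x \<ge> 0" "alpha y \<ge> 0"
  shows "word_reduces I (x # y # w) (if odd (alpha x) \<and> odd (alpha y) then -1 else 1) (y # x # w)"
proof -
  let ?e = "if odd (alpha x) \<and> odd (alpha y) then -1 else (1::int)"
  have "psub (pmonom [x, y]) (psmult (of_int ?e) (pmonom [y, x])) \<in> I"
    using commutator_in[OF assms(1)] anticommutator_in[OF assms(1)]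
    by (auto simp: psub_def padd_def psmult_def fun_eq_iff)
  moreover have "eval_word \<phi> [x, y] = of_int ?e * eval_word \<phi> [y, x]" if "Ecan_subst \<phi>"
    for \<phi> :: "var \<Rightarrow> 'a grass"
    using grass_homog_commute[OF grass_homog_eval_var[OF that assms(2)]
        grass_homog_eval_var[OF that assms(3)]] assms(2,3)
    by (simp add: minus_one_power_iff even_nat_iff)
  ultimately have "word_reduces I [x, y] ?e [y, x]"
    by (simp add: word_reduces_def)
  from word_reduces_append[OF pideal this, of w] show ?thesis by simp
qed

definition normal_form :: "var list \<Rightarrow> int \<Rightarrow> var list \<Rightarrow> bool" where
  "normal_form w c m \<longleftrightarrow> word_reduces I w c m \<and> (c \<noteq> 0 \<longrightarrow> normal_word p m \<and> mset m = mset w)"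

lemma normal_form_zero: "word_reduces I w 0 m \<Longrightarrow> normal_form w 0 m"
  by (simp add: normal_form_def)

lemma normal_form_sorted_Cons:
  assumes "normal_word p m" "sorted (x # m)"
  shows "\<exists>c m'. normal_form (x # m) c m'"
proof -
  have "even (alpha x) \<Longrightarrow> alpha x \<ge> 1 \<Longrightarrow> count (mset m) x < p"
    by (rule normal_wordD[OF assms(1)])
  then consider "alpha x < 0" | "odd (alpha x)" "x \<in> set m"
    | "even (alpha x)" "alpha x \<ge> 1" "count (mset m) x + 1 = p"
    | "alpha x \<ge> 0" "odd (alpha x) \<Longrightarrow> x \<notin> set m"
      "even (alpha x) \<Longrightarrow> alpha x \<ge> 1 \<Longrightarrow> count (mset m) x + 1 < p"
    by (cases "alpha x < 0"; cases "odd (alpha x)"; cases "x \<in> set m";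
        cases "count (mset m) x + 1 = p") (auto intro: Suc_lessI)
  then show ?thesis
  proof cases
    case 1
    then show ?thesis using word_reduces_neg_var normal_form_zero by blast
  next
    case 2
    then obtain m' where "m = x # m'"
      using assms(2) by (cases m) (auto simp: antisym)
    then show ?thesis using word_reduces_odd_square[OF 2(1)] normal_form_zero by blast
  next
    case 3
    have "x # m = replicate (count (mset (x # m)) x) x @ filter (\<lambda>z. z \<noteq> x) (x # m)"
      using assms(2) by (intro sorted_eq_replicate_min_append) auto
    moreover have "count (mset (x # m)) x = p"
      using 3(3) by simp
    ultimately have "x # m = replicate p x @ filter (\<lambda>z. z \<noteq> x) (x # m)"
      by metis
    then show ?thesis using word_reduces_power[OF 3(1,2)] normal_form_zero by metis
  next
    case 4
    then have "normal_word p (x # m)"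
      using assms by (intro normal_word_Cons)
    then show ?thesis using word_reduces_refl[OF pideal] normal_form_def by blast
  qed
qed

lemma normal_form_Cons:
  assumes "normal_word p m"
  shows "\<exists>c m'. normal_form (x # m) c m'"
  using assms
proof (induction m)
  case Nil
  then show ?case by (intro normal_form_sorted_Cons) simp_all
next
  case (Cons y m)
  show ?case
  proof (cases "x \<le> y")
    case True
    moreover have "sorted (y # m)"
      using normal_wordD(1)[OF Cons.prems] .
    ultimately show ?thesis
      using Cons.prems by (intro normal_form_sorted_Cons) (auto intro: order_trans)
  next
    case False
    show ?thesis
    proof (cases "alpha x < 0")
      case True
      then show ?thesis using word_reduces_neg_var normal_form_zero by blast
    next
      case x_nonneg: False
      obtain c m' where IH: "normal_form (x # m) c m'"
        using Cons.IH[OF normal_word_ConsD[OF Cons.prems]] by blast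
      let ?e = "if odd (alpha x) \<and> odd (alpha y) then -1 else (1::int)"
      have "alpha y \<ge> 0" using normal_wordD(2)[OF Cons.prems] by simp
      then have "word_reduces I (x # y # m) (?e * c) (y # m')"
        using False x_nonneg IH unfolding normal_form_def
        by (intro word_reduces_trans[OF pideal word_reduces_swap word_reduces_Cons[OF pideal]]) auto
      moreover have "normal_word p (y # m')" "mset (y # m') = mset (x # y # m)" if "?e * c \<noteq> 0"
        using that IH Cons.prems False normal_word_Cons_swap[of p y m m' x]
        by (auto simp: normal_form_def)
      ultimately show ?thesis
        unfolding normal_form_def by blast
    qed
  qed
qed

lemma normal_form_exists: "\<exists>c m. normal_form w c m"
proof (induction w)
  case Nil
  have "normal_form [] 1 []"
    using normal_word_Nil p_gt_2 word_reduces_refl[OF pideal] by (simp add: normal_form_def)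
  then show ?case by blast
next
  case (Cons x w)
  then obtain c m where cm: "normal_form w c m" by blast
  then have reduces: "word_reduces I (x # w) c (x # m)"
    by (simp add: normal_form_def word_reduces_Cons[OF pideal])
  show ?case
  proof (cases "c = 0")
    case True
    then show ?thesis using reduces normal_form_zero by blast
  next
    case False
    then have "normal_word p m"
      using cm by (simp add: normal_form_def)
    then obtain d m' where "normal_form (x # m) d m'"
      using normal_form_Cons by blast
    then have "normal_form (x # w) (c * d) m'"
      using cm word_reduces_trans[OF pideal reduces]
      by (auto simp: normal_form_def)
    then show ?thesis by blast
  qed
qed

end

section \<open>Independence of normal words\<close>

text \<open>Generators are indexed injectively by the triples \<open>(x, j, i)\<close> via \<^const>\<open>to_nat\<close>, so
  the blocks of distinct pairs \<open>(x, j)\<close> are disjoint.\<close>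

definition block :: "var \<Rightarrow> nat \<Rightarrow> nat set" where
  "block x j = (\<lambda>i. to_nat (x, j, i)) ` {..<nat (alpha x)}"

definition blocks :: "(var \<Rightarrow> nat) \<Rightarrow> var \<Rightarrow> nat set" where
  "blocks k x = (\<Union>j<k x. block x j)"

definition test_subst :: "(var \<Rightarrow> nat) \<Rightarrow> (var \<Rightarrow> 'a) \<Rightarrow> var \<Rightarrow> 'a::field grass" where
  "test_subst k t x =
    (if alpha x = 0 then (\<lambda>S. if S = {} then t x else 0)
     else if alpha x > 0 then (\<lambda>S. if \<exists>j<k x. S = block x j then 1 else 0)
     else gzero)"

lemma finite_block [simp]: "finite (block x j)"
  by (simp add: block_def)

lemma card_block: "card (block x j) = nat (alpha x)"
  unfolding block_def by (subst card_image) (auto simp: inj_on_def)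

lemma block_nonempty: "alpha x > 0 \<Longrightarrow> block x j \<noteq> {}"
  by (auto simp: block_def lessThan_empty_iff)

lemma block_disjoint: "(x, j) \<noteq> (y, j') \<Longrightarrow> block x j \<inter> block y j' = {}"
  by (auto simp: block_def)

lemma block_eq_iff: "alpha x > 0 \<Longrightarrow> block x j = block x j' \<longleftrightarrow> j = j'"
  using block_disjoint[of x j x j'] block_nonempty[of x j] by auto

lemma finite_blocks [simp]: "finite (blocks k x)"
  by (simp add: blocks_def)

lemma card_blocks: "card (blocks k x) = k x * nat (alpha x)"
proof -
  have "card (blocks k x) = (\<Sum>j<k x. card (block x j))"
    unfolding blocks_def by (rule card_UN_disjoint) (auto simp: block_disjoint)
  then show ?thesis by (simp add: card_block)
qed

lemma blocks_disjoint:
  assumes "x \<noteq> y"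
  shows "blocks k x \<inter> blocks k y = {}"
proof -
  have "block x j \<inter> block y j' = {}" for j j'
    using assms by (intro block_disjoint) simp
  then show ?thesis by (auto simp: blocks_def)
qed

lemma Ecan_subst_test_subst: "Ecan_subst (test_subst k t)"
  unfolding Ecan_subst_def
proof
  fix x
  show "test_subst k t x \<in> Ecan_comp (alpha x)"
  proof (cases "alpha x < 0")
    case False
    have "{S. test_subst k t x S \<noteq> 0} \<subseteq> insert {} (block x ` {..<k x})"
      by (auto simp: test_subst_def gzero_def split: if_splits)
    then have "finite {S. test_subst k t x S \<noteq> 0}"
      by (rule finite_subset) simp
    moreover have "finite S \<and> card S = nat (alpha x)" if "test_subst k t x S \<noteq> 0" for S
      using False that by (auto simp: test_subst_def card_block gzero_def split: if_splits)
    ultimately show ?thesis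
      using False by (simp add: Ecan_comp_def grass_def)
  qed (simp add: test_subst_def Ecan_comp_def)
qed

lemma eval_var_test_subst_zero:
  "alpha x = 0 \<Longrightarrow> eval_var (test_subst k t) x = gmonom {} (t x)"
  by (rule Rep_grassmann_inject[THEN iffD1])
    (simp add: Rep_eval_var[OF Ecan_subst_test_subst] gmonom.rep_eq test_subst_def fun_eq_iff)

lemma eval_var_test_subst_pos:
  assumes "alpha x > 0"
  shows "eval_var (test_subst k t) x = (\<Sum>j<k x. gmonom (block x j) 1)"
proof (rule Rep_grassmann_inject[THEN iffD1], rule ext)
  fix S
  have "Rep_grassmann (\<Sum>j<k x. gmonom (block x j) 1) S = (\<Sum>j<k x. if S = block x j then 1 else 0)"
    by (simp add: Rep_grassmann_sum gmonom.rep_eq)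
  also have "\<dots> = (if \<exists>j<k x. S = block x j then 1 else (0::'a))"
  proof (cases "\<exists>j<k x. S = block x j")
    case True
    then obtain j where j: "j < k x" "S = block x j" by auto
    then have "(\<Sum>j'<k x. if S = block x j' then 1 else (0::'a)) = (\<Sum>j'<k x. if j' = j then 1 else 0)"
      using block_eq_iff[OF assms] by (intro sum.cong) auto
    then show ?thesis using j by auto
  qed auto
  finally show "Rep_grassmann (eval_var (test_subst k t) x) S =
    Rep_grassmann (\<Sum>j<k x. gmonom (block x j) 1) S"
    using assms by (simp add: Rep_eval_var[OF Ecan_subst_test_subst] test_subst_def)
qed

lemma eval_word_test_subst_scalars:
  "\<forall>x\<in>set w. alpha x \<noteq> 0 \<Longrightarrow> eval_word (test_subst k t) w = eval_word (test_subst k t') w"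
  unfolding eval_word_def eval_var_def by (intro arg_cong[where f=prod_list] map_cong refl)
    (simp add: test_subst_def)

lemma eval_word_test_subst_split:
  assumes "\<forall>x\<in>set w. alpha x \<ge> 0"
  shows "eval_word (test_subst k t) w = gmonom {} (prod_list (map t (filter (\<lambda>x. alpha x = 0) w)))
    * eval_word (test_subst k t) (filter (\<lambda>x. alpha x \<noteq> 0) w)"
  using assms
proof (induction w)
  case Nil
  then show ?case by (simp flip: one_eq_gmonom)
next
  case (Cons x w)
  let ?c = "gmonom {} (prod_list (map t (filter (\<lambda>x. alpha x = 0) w)))"
  have IH: "eval_word (test_subst k t) w = ?c * eval_word (test_subst k t) (filter (\<lambda>x. alpha x \<noteq> 0) w)"
    using Cons by simp
  show ?case
  proof (cases "alpha x = 0")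
    case True
    then show ?thesis
      by (simp add: IH eval_var_test_subst_zero gmonom_mult flip: mult.assoc)
  next
    case False
    let ?v = "eval_var (test_subst k t) x" and ?r = "eval_word (test_subst k t) (filter (\<lambda>x. alpha x \<noteq> 0) w)"
    have "?v * (?c * ?r) = (?v * ?c) * ?r"
      by (rule mult.assoc[symmetric])
    also have "?v * ?c = ?c * ?v"
      by (rule gmonom_empty_commute[symmetric])
    finally show ?thesis
      using False by (simp add: IH mult.assoc)
  qed
qed

lemma card_inter_blocks_le:
  assumes "alpha x > 0" "Rep_grassmann (eval_word (test_subst k t) w) U \<noteq> 0"
  shows "card (U \<inter> blocks k x) \<le> count (mset w) x * nat (alpha x)"
  using assms(2)
proof (induction w arbitrary: U)
  case Nil
  then show ?case by (simp add: one_grassmann.rep_eq gone_def split: if_splits)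
next
  case (Cons y w)
  obtain S where S: "S \<subseteq> U" "test_subst k t y S \<noteq> 0"
    "Rep_grassmann (eval_word (test_subst k t) w) (U - S) \<noteq> 0"
    using eval_word_Cons_neq_0[OF Ecan_subst_test_subst Cons.prems] .
  have "card (S \<inter> blocks k x) \<le> (if y = x then nat (alpha x) else 0)"
  proof (cases "alpha y = 0")
    case True
    then show ?thesis using S(2) by (simp add: test_subst_def split: if_splits)
  next
    case False
    then obtain j where j: "S = block y j"
      using S(2) by (auto simp: test_subst_def gzero_def split: if_splits)
    show ?thesis
    proof (cases "y = x")
      case True
      then show ?thesis using j card_block card_mono[of S "S \<inter> blocks k x"]
        by (metis Int_lower1 card_mono finite_block)
    next
      case False
      then have "S \<inter> blocks k x = {}"
        using j block_disjoint[of y j x] by (auto simp: blocks_def)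
      then show ?thesis by simp
    qed
  qed
  moreover have "card ((U - S) \<inter> blocks k x) \<le> count (mset w) x * nat (alpha x)"
    using Cons.IH S(3) .
  moreover have "U \<inter> blocks k x = (S \<inter> blocks k x) \<union> ((U - S) \<inter> blocks k x)"
    using S(1) by auto
  ultimately show ?case
    using card_Un_le[of "S \<inter> blocks k x" "(U - S) \<inter> blocks k x"] by (auto split: if_splits)
qed

lemma eval_var_test_subst_power:
  fixes t :: "var \<Rightarrow> 'a::field"
  assumes "prime p" "CHAR('a) = p" "alpha x > 0" "k x < p" "odd (alpha x) \<Longrightarrow> k x \<le> 1"
  obtains c where "c \<noteq> 0" "eval_var (test_subst k t) x ^ k x = gmonom (blocks k x) c"
proof -
  define m where "m j = gmonom (block x j) (1::'a)" for j
  have commute: "m i * m j = m j * m i" if "i < k x" "j < k x" for i j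
  proof (cases "i = j")
    case False
    with that assms(3,5) have "even (nat (alpha x))" by (auto simp: even_nat_iff)
    then show ?thesis
      using grass_homog_commute[OF grass_homog_gmonom grass_homog_gmonom, of "block x i" 1 "block x j" 1]
      by (simp add: m_def card_block)
  qed simp
  have square: "m i * m i = 0" for i
    unfolding m_def using block_nonempty[OF assms(3)] by (simp add: gmonom_square)
  have power: "(\<Sum>j<k x. m j) ^ k x = of_nat (fact (k x)) * prod_list (map m [0..<k x])"
    by (rule power_sum_squares_zero_fact) (use commute square in auto)
  have "\<forall>S\<in>set (map (block x) [0..<k x]). finite S"
    by simp
  moreover have "sorted_wrt (\<lambda>S T. S \<inter> T = {}) (map (block x) [0..<k x])"
    unfolding sorted_wrt_map by (rule sorted_wrt_mono_rel[OF _ sorted_wrt_upt]) (simp add: block_disjoint)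
  ultimately obtain c where c: "c \<noteq> 0"
    "prod_list (map (\<lambda>S. gmonom S 1) (map (block x) [0..<k x])) = gmonom (\<Union>(set (map (block x) [0..<k x]))) (c::'a)"
    by (rule prod_list_gmonom_disjoint)
  have fact_neq_0: "(of_nat (fact (k x)) :: 'a) \<noteq> 0"
  proof
    assume "(of_nat (fact (k x)) :: 'a) = 0"
    then have "p dvd fact (k x)"
      using assms(2) of_nat_eq_0_iff_char_dvd by metis
    then show False
      using prime_dvd_fact_iff[OF assms(1)] assms(4) by simp
  qed
  have "eval_var (test_subst k t) x ^ k x = (\<Sum>j<k x. m j) ^ k x"
    by (simp add: eval_var_test_subst_pos[OF assms(3)] m_def)
  also have "\<dots> = of_nat (fact (k x)) * gmonom (blocks k x) c"
    using power c(2) by (simp add: m_def[abs_def] blocks_def comp_def atLeast0LessThan)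
  also have "\<dots> = gmonom (blocks k x) (of_nat (fact (k x)) * c)"
    by (simp add: of_nat_eq_gmonom gmonom_mult)
  finally show ?thesis
    using that[of "of_nat (fact (k x)) * c"] c(1) fact_neq_0 by simp
qed

lemma eval_word_test_subst_pos:
  fixes t :: "var \<Rightarrow> 'a::field"
  assumes "prime p" "CHAR('a) = p" "sorted w"
    and "\<And>x. x \<in> set w \<Longrightarrow> alpha x > 0 \<and> count (mset w) x = k x \<and> k x < p \<and> (odd (alpha x) \<longrightarrow> k x \<le> 1)"
  obtains c where "c \<noteq> 0" "eval_word (test_subst k t) w = gmonom (\<Union>x\<in>set w. blocks k x) c"
  using assms(3,4)
proof (induction "length w" arbitrary: w thesis rule: less_induct)
  case less
  show ?case
  proof (cases w)
    case Nil
    then show ?thesis using less.prems(1)[of 1] by (simp flip: one_eq_gmonom)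
  next
    case (Cons x w')
    define r where "r = filter (\<lambda>z. z \<noteq> x) w"
    have x: "x \<in> set w" "\<forall>z\<in>set w. x \<le> z" using less.prems(2) Cons by auto
    moreover have "count (mset w) x = k x"
      using less.prems(3)[OF x(1)] by simp
    ultimately have w: "w = replicate (k x) x @ r"
      using sorted_eq_replicate_min_append[OF less.prems(2), of x] by (simp add: r_def)
    obtain c1 where c1: "c1 \<noteq> 0" "eval_var (test_subst k t) x ^ k x = gmonom (blocks k x) c1"
      by (rule eval_var_test_subst_power[OF assms(1,2)]) (use less.prems(3)[OF x(1)] in auto)
    obtain c2 where c2: "c2 \<noteq> 0" "eval_word (test_subst k t) r = gmonom (\<Union>z\<in>set r. blocks k z) c2"
    proof (rule less.hyps)
      show "length r < length w" unfolding r_def using x(1) by (simp add: length_filter_less)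
      show "sorted r" unfolding r_def using less.prems(2) by (simp add: sorted_wrt_filter)
    qed (use less.prems(3) in \<open>auto simp: r_def\<close>)
    have "blocks k x \<inter> blocks k z = {}" if "z \<in> set r" for z
      using that by (intro blocks_disjoint) (auto simp: r_def)
    then have disj: "blocks k x \<inter> (\<Union>z\<in>set r. blocks k z) = {}"
      by blast
    obtain c where "c \<noteq> 0"
      "gmonom (blocks k x) c1 * gmonom (\<Union>z\<in>set r. blocks k z) c2 = gmonom (blocks k x \<union> (\<Union>z\<in>set r. blocks k z)) c"
      by (rule gmonom_mult_disjoint[of "blocks k x" "\<Union>z\<in>set r. blocks k z" c1 c2]) (use c1(1) c2(1) disj in auto)
    moreover have "eval_word (test_subst k t) w = eval_var (test_subst k t) x ^ k x * eval_word (test_subst k t) r"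
      by (subst w) (simp add: eval_word_def prod_list_replicate)
    moreover have "blocks k x \<union> (\<Union>z\<in>set r. blocks k z) = (\<Union>z\<in>set w. blocks k z)"
      using x(1) by (auto simp: r_def)
    ultimately show ?thesis
      using less.prems(1) unfolding c1(2) c2(2) by metis
  qed
qed

lemma test_subst_support_eq:
  assumes w0: "sorted w0" "\<And>x. x \<in> set w0 \<Longrightarrow> alpha x > 0 \<and> count (mset w0) x = k x"
    and w: "sorted w" "\<forall>x\<in>set w. alpha x > 0"
    and nz: "Rep_grassmann (eval_word (test_subst k t) w) (\<Union>x\<in>set w0. blocks k x) \<noteq> 0"
  shows "w = w0"
proof -
  let ?U = "\<Union>x\<in>set w0. blocks k x" and ?a = "\<lambda>x. nat (alpha x)"
  define Y where "Y = set w \<union> set w0"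
  have nonneg: "\<forall>x\<in>set w. alpha x \<ge> 0"
    using w(2) by auto
  have "card ?U = (\<Sum>x\<leftarrow>w. ?a x)"
    using grass_homog_eval_word[OF Ecan_subst_test_subst nonneg] nz unfolding grass_homog_def by blast
  also have "\<dots> = (\<Sum>x\<in>Y. count (mset w) x * ?a x)"
    by (simp add: sum_list_map_eq_sum_count2 Y_def count_mset)
  finally have card_w: "card ?U = (\<Sum>x\<in>Y. count (mset w) x * ?a x)" .
  have "card ?U = (\<Sum>x\<in>set w0. card (blocks k x))"
    by (rule card_UN_disjoint) (auto simp: blocks_disjoint)
  also have "\<dots> = (\<Sum>x\<in>set w0. count (mset w0) x * ?a x)"
    using w0(2) by (intro sum.cong refl) (simp add: card_blocks)
  also have "\<dots> = (\<Sum>x\<in>Y. count (mset w0) x * ?a x)"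
    by (rule sum.mono_neutral_left) (auto simp: Y_def count_mset_0_iff)
  finally have card_w0: "card ?U = (\<Sum>x\<in>Y. count (mset w0) x * ?a x)" .
  have le: "count (mset w0) x * ?a x \<le> count (mset w) x * ?a x" for x
  proof (cases "x \<in> set w0")
    case True
    then have "?U \<inter> blocks k x = blocks k x" by auto
    then show ?thesis
      using card_inter_blocks_le[OF _ nz, of x] w0(2)[OF True] by (simp add: card_blocks)
  qed (simp add: count_mset_0_iff[THEN iffD2])
  have "count (mset w0) x = count (mset w) x" for x
  proof (cases "x \<in> Y")
    case True
    have "count (mset w0) x * ?a x = count (mset w) x * ?a x"
      by (rule sum_mono_inv[OF _ le True]) (use card_w card_w0 in \<open>simp_all add: Y_def\<close>)
    moreover have "?a x > 0"
      using True w(2) w0(2)[of x] by (auto simp: Y_def)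
    ultimately show ?thesis by simp
  qed (simp add: Y_def count_mset_0_iff[THEN iffD2])
  then have "mset w = mset w0" by (simp add: multiset_eq_iff)
  then show ?thesis using w(1) w0(1) by (metis properties_for_sort)
qed

lemma normal_word_pos_part:
  assumes "normal_word p m"
  shows "sorted (filter (\<lambda>x. alpha x \<noteq> 0) m)"
    and "x \<in> set (filter (\<lambda>x. alpha x \<noteq> 0) m) \<Longrightarrow>
      alpha x > 0 \<and> count (mset (filter (\<lambda>x. alpha x \<noteq> 0) m)) x = count (mset m) x"
  using normal_wordD(1,2)[OF assms] by (auto simp: sorted_wrt_filter less_le)

lemma test_subst_pos_part_eq:
  assumes "normal_word p m0" "normal_word p m"
    and "Rep_grassmann (eval_word (test_subst (count (mset m0)) t) (filter (\<lambda>x. alpha x \<noteq> 0) m))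
      (\<Union>x\<in>set (filter (\<lambda>x. alpha x \<noteq> 0) m0). blocks (count (mset m0)) x) \<noteq> 0"
  shows "filter (\<lambda>x. alpha x \<noteq> 0) m = filter (\<lambda>x. alpha x \<noteq> 0) m0"
  using assms(3)
proof (rule test_subst_support_eq[rotated -1])
  show "\<forall>x\<in>set (filter (\<lambda>x. alpha x \<noteq> 0) m). alpha x > 0"
    using normal_word_pos_part(2)[OF assms(2)] by blast
qed (use normal_word_pos_part[OF assms(1)] normal_word_pos_part[OF assms(2)] in auto)

lemma eval_test_subst_normal_word:
  assumes "prime p" "CHAR('a) = p" "normal_word p m0"
    and k: "k = count (mset m0)" and U: "U = (\<Union>x\<in>set (filter (\<lambda>x. alpha x \<noteq> 0) m0). blocks k x)"
  obtains V :: "'a::field" where "V \<noteq> 0" and "\<And>m t. normal_word p m \<Longrightarrow> Rep_grassmann (eval_word (test_subst k t) m) U =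
    (if filter (\<lambda>x. alpha x \<noteq> 0) m = filter (\<lambda>x. alpha x \<noteq> 0) m0
     then prod_list (map t (filter (\<lambda>x. alpha x = 0) m)) * V else 0)"
proof -
  let ?pos = "filter (\<lambda>x. alpha x \<noteq> 0)" and ?zero = "filter (\<lambda>x. alpha x = 0)"
  obtain V where V: "V \<noteq> 0" "eval_word (test_subst k (\<lambda>_. 0::'a)) (?pos m0) = gmonom U V"
  proof (rule eval_word_test_subst_pos[OF assms(1,2) normal_word_pos_part(1)[OF assms(3)], where t="\<lambda>_. 0::'a"])
    fix x assume x: "x \<in> set (?pos m0)"
    then show "alpha x > 0 \<and> count (mset (?pos m0)) x = k x \<and> k x < p \<and> (odd (alpha x) \<longrightarrow> k x \<le> 1)"
      using normal_word_pos_part(2)[OF assms(3) x] normal_wordD(3,4)[OF assms(3), of x]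
        prime_gt_1_nat[OF assms(1)]
      by (cases "odd (alpha x)") (auto simp: k)
  qed (auto simp: U)
  have eval: "Rep_grassmann (eval_word (test_subst k t) m) U =
      (if ?pos m = ?pos m0 then prod_list (map t (?zero m)) * V else 0)" if "normal_word p m" for m t
  proof -
    have "eval_word (test_subst k t) (?pos m) = eval_word (test_subst k (\<lambda>_. 0::'a)) (?pos m)"
      by (rule eval_word_test_subst_scalars) simp
    then have split: "Rep_grassmann (eval_word (test_subst k t) m) U =
        prod_list (map t (?zero m)) * Rep_grassmann (eval_word (test_subst k (\<lambda>_. 0::'a)) (?pos m)) U"
      using eval_word_test_subst_split[of m k t] normal_wordD(2)[OF that]
      by (simp add: Rep_gmonom_empty_mult)
    show ?thesis
    proof (cases "?pos m = ?pos m0")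
      case True
      then show ?thesis
        using split V(2) by (simp add: U gmonom.rep_eq)
    next
      case False
      then have "Rep_grassmann (eval_word (test_subst k (\<lambda>_. 0::'a)) (?pos m)) U = 0"
        using test_subst_pos_part_eq[OF assms(3) that] by (auto simp: k U)
      then show ?thesis using split False by simp
    qed
  qed
  show ?thesis
    using that[OF V(1) eval] .
qed

lemma sorted_eq_if_degree_parts_eq:
  assumes "sorted m" "sorted m'"
    and "filter (\<lambda>x. alpha x \<noteq> 0) m = filter (\<lambda>x. alpha x \<noteq> 0) m'"
    and "\<forall>z\<in>set (filter (\<lambda>x. alpha x = 0) m) \<union> set (filter (\<lambda>x. alpha x = 0) m').
      count (mset m) z = count (mset m') z"
  shows "m = m'"
proof -
  have "count (mset m) z = count (mset m') z" for z
  proof (cases "alpha z = 0")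
    case True
    then show ?thesis
      using assms(4) by (cases "z \<in> set m \<union> set m'") (auto simp: count_mset_0_iff[THEN iffD2])
  next
    case False
    have "count (mset (filter (\<lambda>x. alpha x \<noteq> 0) m)) z = count (mset (filter (\<lambda>x. alpha x \<noteq> 0) m')) z"
      using assms(3) by simp
    then show ?thesis using False by simp
  qed
  then have "mset m = mset m'"
    by (simp add: multiset_eq_iff)
  then show ?thesis
    using assms(1,2) by (metis properties_for_sort)
qed

lemma normal_words_independent:
  fixes d :: "var list \<Rightarrow> 'a::field"
  assumes "infinite (UNIV :: 'a set)" "CHAR('a) = p" "prime p"
    and "finite M" "\<And>m. m \<in> M \<Longrightarrow> normal_word p m"
    and "\<And>(\<phi> :: var \<Rightarrow> 'a grass) U. Ecan_subst \<phi> \<Longrightarrow> (\<Sum>m\<in>M. d m * Rep_grassmann (eval_word \<phi> m) U) = 0"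
    and "m0 \<in> M"
  shows "d m0 = 0"
proof -
  let ?pos = "filter (\<lambda>x. alpha x \<noteq> 0)" and ?zero = "filter (\<lambda>x. alpha x = 0)"
  define k where "k = count (mset m0)"
  define U0 where "U0 = (\<Union>x\<in>set (?pos m0). blocks k x)"
  obtain V :: 'a where V: "V \<noteq> 0" and eval: "\<And>m t. normal_word p m \<Longrightarrow>
      Rep_grassmann (eval_word (test_subst k t) m) U0 =
      (if ?pos m = ?pos m0 then prod_list (map t (?zero m)) * V else 0)"
    by (rule eval_test_subst_normal_word[OF assms(3,2) assms(5)[OF assms(7)] k_def U0_def]) blast
  define M' where "M' = {m\<in>M. ?pos m = ?pos m0}"
  define Z where "Z = (\<Union>m\<in>M. set (?zero m))"
  have "finite Z" using assms(4) by (simp add: Z_def)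
  have prod_count: "prod_list (map t (?zero m)) = (\<Prod>z\<in>Z. t z ^ count (mset m) z)" if "m \<in> M" for m t
    using that \<open>finite Z\<close> by (intro prod_list_map_filter_eq_prod_count) (auto simp: Z_def)
  show "d m0 = 0"
  proof (rule coeffs_eq_0_if_sum_monomials_eq_0[OF assms(1) \<open>finite Z\<close>,
        where K = M' and c = d and e = "\<lambda>m. count (mset m)"])
    show "finite M'" using assms(4) by (simp add: M'_def)
    show "m0 \<in> M'" using assms(7) by (simp add: M'_def)
  next
    fix t
    have "0 = (\<Sum>m\<in>M. d m * Rep_grassmann (eval_word (test_subst k t) m) U0)"
      using assms(6)[OF Ecan_subst_test_subst] by simp
    also have "\<dots> = (\<Sum>m\<in>M. if m \<in> M' then d m * (\<Prod>z\<in>Z. t z ^ count (mset m) z) * V else 0)"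
      by (intro sum.cong refl) (simp add: eval assms(5) prod_count M'_def)
    also have "\<dots> = (\<Sum>m\<in>M'. d m * (\<Prod>z\<in>Z. t z ^ count (mset m) z)) * V"
      using assms(4) by (simp add: sum.If_cases M'_def Int_def sum_distrib_right)
    finally show "(\<Sum>m\<in>M'. d m * (\<Prod>z\<in>Z. t z ^ count (mset m) z)) = 0"
      using V(1) by simp
  next
    fix m m' assume m: "m \<in> M'" "m' \<in> M'" and eq: "\<forall>z\<in>Z. count (mset m) z = count (mset m') z"
    show "m = m'"
    proof (rule sorted_eq_if_degree_parts_eq)
      show "sorted m" "sorted m'"
        using m normal_wordD(1) assms(5) by (auto simp: M'_def)
      show "?pos m = ?pos m'"
        using m by (simp add: M'_def)
      show "\<forall>z\<in>set (?zero m) \<union> set (?zero m'). count (mset m) z = count (mset m') z"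
        using m eq by (auto simp: Z_def M'_def)
    qed
  qed
qed

context Ecan_TZ_ideal
begin

lemma Ecan_identity_in_ideal:
  assumes "infinite (UNIV :: 'a set)" "Ecan_identity f"
  shows "f \<in> I"
proof -
  obtain c m where nf: "\<And>w. normal_form w (c w) (m w)"
    using normal_form_exists by metis
  then have reduces: "\<And>w. word_reduces I w (c w) (m w)"
    by (simp add: normal_form_def)
  have "fpoly f"
    using assms(2) by (simp add: Ecan_identity_def)
  define M where "M = m ` {w. f w \<noteq> 0 \<and> c w \<noteq> 0}"
  define d where "d u = (\<Sum>w | f w \<noteq> 0 \<and> m w = u. f w * of_int (c w))" for u
  have "d u = 0" for u
  proof (cases "u \<in> M")
    case True
    show ?thesis
    proof (rule normal_words_independent[OF assms(1) char prime _ _ _ True])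
      show "finite M"
        using \<open>fpoly f\<close> by (simp add: M_def fpoly_def)
      show "normal_word p u" if "u \<in> M" for u
        using that nf by (auto simp: M_def normal_form_def)
      show "(\<Sum>u\<in>M. d u * Rep_grassmann (eval_word \<phi> u) U) = 0" if "Ecan_subst \<phi>" for \<phi> U
        using peval_eq_sum_reduced_words[OF that \<open>fpoly f\<close> reduces, of U] assms(2) that
        by (simp add: M_def d_def Ecan_identity_def Ecan_subst_def gzero_def)
    qed
  qed (auto simp: d_def M_def intro!: sum.neutral)
  then have "f = (\<Sum>w | f w \<noteq> 0. psmult (f w) (psub (pmonom w) (psmult (of_int (c w)) (pmonom (m w)))))"
    using fpoly_eq_sum_reduced_words[OF \<open>fpoly f\<close>] by (simp add: d_def)
  also have "\<dots> \<in> I"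
  proof (intro pideal_sum[OF pideal] pideal_psmult[OF pideal])
    show "finite {w. f w \<noteq> 0}"
      using \<open>fpoly f\<close> by (simp add: fpoly_def)
    show "psub (pmonom w) (psmult (of_int (c w)) (pmonom (m w))) \<in> I" for w
      using reduces[of w] by (simp add: word_reduces_def)
  qed
  finally show ?thesis .
qed

end

theorem mainTheorem2:
  fixes p :: nat
  assumes "infinite (UNIV :: 'a::field set)"
    and "CHAR('a) = p" and "prime p" and "p > 2"
  shows "{f :: 'a fpoly. Ecan_identity f} \<subseteq> TZ_gen (Ecan_gens p)"
  unfolding TZ_gen_def
proof (intro subsetI InterI)
  fix f :: "'a fpoly" and I :: "'a fpoly set"
  assume "f \<in> {f. Ecan_identity f}" and "I \<in> {I. TZ_ideal I \<and> Ecan_gens p \<subseteq> I}"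
  then have "Ecan_identity f" "TZ_ideal I" "Ecan_gens p \<subseteq> I"
    by simp_all
  then interpret Ecan_TZ_ideal I p
    using assms(2-4) by unfold_locales
  show "f \<in> I"
    using Ecan_identity_in_ideal[OF assms(1) \<open>Ecan_identity f\<close>] .
qed

end
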